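(* Let $T:\mathbb{R}^M\times\cdots\times\mathbb{R}^M\to\mathbb{R}^D$ ($N$ factors) be a real $N$-linear contraction with respect to the Euclidean norm, and regard $T$ as the real $D\times M^N$ matrix with entries $T_{i,s}$, so that $T^\dagger T$ is a real symmetric matrix on $(\mathbb{R}^M)^{\otimes N}$. Then the following are equivalent: 1. $T$ has a norm-preserving dilation, i.e. there is a norm-preserving $N$-linear map $\tilde T:\mathbb{R}^M\times\cdots\times\mathbb{R}^M\to\mathbb{R}^{D'}$ with $D'\ge D$ whose first $D$ output coordinates coincide with $T$; 2. there is a real symmetric matrix $Q$ on $(\mathbb{R}^M)^{\otimes N}$ of the form $Q=\sum_gc_g\bigotimes_{k=1}^NG_{g_k}$ with $c_g=0$ whenever all components of $g$ are non-negative, such that $\mathbb{1}\ge T^\dagger T+Q$; 3. $\mathrm{tr}[\rho\,T^\dagger T]\le1$ for all real density matrices $\rho$ on $(\mathbb{R}^M)^{\otimes N}$ of the form $\rho=\sum_{g\ge0}c_g\bigotimes_{k=1}^NG_{g_k}$ (sum only over $g$ with all components non-negative).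
   Context: An $N$-linear map is $T(a^{(1)},\dots,a^{(N)})_i=\sum_{s\in\{1,\dots,M\}^N}T_{i,s}\prod_ka^{(k)}_{s_k}$; it is a contraction if $\|T(a^{(1)},\dots,a^{(N)})\|\le\prod_k\|a^{(k)}\|$ for all inputs and norm-preserving if equality always holds. $\{G_\gamma\}$ is a set of $M^2$ real $M\times M$ matrices forming a basis of all real $M\times M$ matrices, orthogonal w.r.t. $(X,Y)\mapsto\mathrm{tr}[XY^T]$, with $G_0=\mathbb{1}$, $G_\gamma$ symmetric for $\gamma\ge0$ and antisymmetric for $\gamma<0$, normalized by $\mathrm{tr}[G_\gamma G_{\gamma'}^T]=2\delta_{\gamma\gamma'}$ for $\gamma,\gamma'\ne0$; $g=(g_1,\dots,g_N)$ ranges over $N$-tuples of indices and $c_g\in\mathbb{R}$. A real density matrix is a real positive semidefinite matrix of trace one; $X\le Y$ means $Y-X$ is positive semidefinite. *)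

theory Defs
  imports Main "HOL-Library.Multiset" Complex_Main
begin

text \<open>Vectors in R^n are functions nat => real, only coordinates < n matter.
  Multi-indices s in {1..M}^N are lists of length N with entries < M (0-based).
  Inputs (a^(1),...,a^(N)) are given as a : nat => nat => real, a k j = j-th
  coordinate of the k-th input (k < N, j < M).\<close>

definition tuples :: "nat \<Rightarrow> nat \<Rightarrow> nat list set" where
  "tuples M N = {s. length s = N \<and> (\<forall>x\<in>set s. x < M)}"

definition vnorm :: "nat \<Rightarrow> (nat \<Rightarrow> real) \<Rightarrow> real" where
  "vnorm n v = sqrt (\<Sum>j<n. (v j)\<^sup>2)"

definition mlin_apply ::
  "nat \<Rightarrow> nat \<Rightarrow> (nat \<Rightarrow> nat list \<Rightarrow> real) \<Rightarrow> (nat \<Rightarrow> nat \<Rightarrow> real) \<Rightarrow> nat \<Rightarrow> real" where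
  "mlin_apply M N T a i = (\<Sum>s\<in>tuples M N. T i s * (\<Prod>k<N. a k (s ! k)))"

definition is_contraction ::
  "nat \<Rightarrow> nat \<Rightarrow> nat \<Rightarrow> (nat \<Rightarrow> nat list \<Rightarrow> real) \<Rightarrow> bool" where
  "is_contraction M N D T \<longleftrightarrow>
     (\<forall>a. vnorm D (mlin_apply M N T a) \<le> (\<Prod>k<N. vnorm M (a k)))"

definition is_norm_preserving ::
  "nat \<Rightarrow> nat \<Rightarrow> nat \<Rightarrow> (nat \<Rightarrow> nat list \<Rightarrow> real) \<Rightarrow> bool" where
  "is_norm_preserving M N D T \<longleftrightarrow>
     (\<forall>a. vnorm D (mlin_apply M N T a) = (\<Prod>k<N. vnorm M (a k)))"

definition has_np_dilation ::
  "nat \<Rightarrow> nat \<Rightarrow> nat \<Rightarrow> (nat \<Rightarrow> nat list \<Rightarrow> real) \<Rightarrow> bool" where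
  "has_np_dilation M N D T \<longleftrightarrow>
     (\<exists>D' (T' :: nat \<Rightarrow> nat list \<Rightarrow> real). D' \<ge> D \<and> is_norm_preserving M N D' T' \<and>
        (\<forall>a i. i < D \<longrightarrow> mlin_apply M N T' a i = mlin_apply M N T a i))"

text \<open>Matrices on (R^M)^{\<otimes>N}: functions on pairs of multi-indices.\<close>

definition TdagT :: "nat \<Rightarrow> (nat \<Rightarrow> nat list \<Rightarrow> real) \<Rightarrow> nat list \<Rightarrow> nat list \<Rightarrow> real" where
  "TdagT D T s t = (\<Sum>i<D. T i s * T i t)"

definition tensorG ::
  "nat \<Rightarrow> (int \<Rightarrow> nat \<Rightarrow> nat \<Rightarrow> real) \<Rightarrow> int list \<Rightarrow> nat list \<Rightarrow> nat list \<Rightarrow> real" where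
  "tensorG N G g s t = (\<Prod>k<N. G (g ! k) (s ! k) (t ! k))"

definition gtuples :: "int set \<Rightarrow> nat \<Rightarrow> int list set" where
  "gtuples \<Gamma> N = {g. length g = N \<and> set g \<subseteq> \<Gamma>}"

definition tensor_expansion ::
  "int set \<Rightarrow> nat \<Rightarrow> (int \<Rightarrow> nat \<Rightarrow> nat \<Rightarrow> real) \<Rightarrow> (int list \<Rightarrow> real) \<Rightarrow> nat list \<Rightarrow> nat list \<Rightarrow> real" where
  "tensor_expansion \<Gamma> N G c s t = (\<Sum>g\<in>gtuples \<Gamma> N. c g * tensorG N G g s t)"

definition all_nonneg :: "int list \<Rightarrow> bool" where
  "all_nonneg g \<longleftrightarrow> (\<forall>x\<in>set g. x \<ge> 0)"

definition msym_on :: "'i set \<Rightarrow> ('i \<Rightarrow> 'i \<Rightarrow> real) \<Rightarrow> bool" where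
  "msym_on I A \<longleftrightarrow> (\<forall>s\<in>I. \<forall>t\<in>I. A s t = A t s)"

definition psd_on :: "'i set \<Rightarrow> ('i \<Rightarrow> 'i \<Rightarrow> real) \<Rightarrow> bool" where
  "psd_on I A \<longleftrightarrow> msym_on I A \<and>
     (\<forall>x. (\<Sum>s\<in>I. \<Sum>t\<in>I. x s * A s t * x t) \<ge> 0)"

definition idm :: "'i \<Rightarrow> 'i \<Rightarrow> real" where
  "idm s t = (if s = t then 1 else 0)"

definition trace_on :: "'i set \<Rightarrow> ('i \<Rightarrow> 'i \<Rightarrow> real) \<Rightarrow> real" where
  "trace_on I A = (\<Sum>s\<in>I. A s s)"

definition mat_mult_on :: "'i set \<Rightarrow> ('i \<Rightarrow> 'i \<Rightarrow> real) \<Rightarrow> ('i \<Rightarrow> 'i \<Rightarrow> real) \<Rightarrow> 'i \<Rightarrow> 'i \<Rightarrow> real" where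
  "mat_mult_on I A B s t = (\<Sum>u\<in>I. A s u * B u t)"

definition mtr :: "nat \<Rightarrow> (nat \<Rightarrow> nat \<Rightarrow> real) \<Rightarrow> (nat \<Rightarrow> nat \<Rightarrow> real) \<Rightarrow> real" where
  "mtr M X Y = (\<Sum>i<M. \<Sum>j<M. X i j * Y i j)"  \<comment> \<open>tr[X Y^T]\<close>

definition valid_G_basis :: "nat \<Rightarrow> int set \<Rightarrow> (int \<Rightarrow> nat \<Rightarrow> nat \<Rightarrow> real) \<Rightarrow> bool" where
  "valid_G_basis M \<Gamma> G \<longleftrightarrow>
     finite \<Gamma> \<and> card \<Gamma> = M\<^sup>2 \<and> 0 \<in> \<Gamma> \<and>
     (\<forall>i<M. \<forall>j<M. G 0 i j = (if i = j then 1 else 0)) \<and>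
     (\<forall>\<gamma>\<in>\<Gamma>. \<gamma> \<ge> 0 \<longrightarrow> (\<forall>i<M. \<forall>j<M. G \<gamma> i j = G \<gamma> j i)) \<and>
     (\<forall>\<gamma>\<in>\<Gamma>. \<gamma> < 0 \<longrightarrow> (\<forall>i<M. \<forall>j<M. G \<gamma> i j = - G \<gamma> j i)) \<and>
     (\<forall>\<gamma>\<in>\<Gamma>. \<forall>\<gamma>'\<in>\<Gamma>. \<gamma> \<noteq> \<gamma>' \<longrightarrow> mtr M (G \<gamma>) (G \<gamma>') = 0) \<and>
     (\<forall>\<gamma>\<in>\<Gamma>. \<gamma> \<noteq> 0 \<longrightarrow> mtr M (G \<gamma>) (G \<gamma>) = 2) \<and>
     (\<forall>X :: nat \<Rightarrow> nat \<Rightarrow> real. \<exists>a :: int \<Rightarrow> real.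
        \<forall>i<M. \<forall>j<M. X i j = (\<Sum>\<gamma>\<in>\<Gamma>. a \<gamma> * G \<gamma> i j))"

end

theory Submission
  imports Defs
begin

text \<open>
  A norm-preserving dilation \<open>T'\<close> of \<open>T\<close> only appends rows, so
  \<open>T'\<^sup>\<dagger>T' = T\<^sup>\<dagger>T + R\<close> with \<open>R \<ge> 0\<close>, and since \<open>T'\<close> preserves norms, the quadratic form of
  \<open>T'\<^sup>\<dagger>T' - 1\<close> vanishes on all product vectors. Every symmetric matrix is a combination of
  rank-one matrices \<open>v v\<^sup>T\<close>, so such a matrix is orthogonal to every tensor product of symmetric
  basis matrices, i.e. \<open>T'\<^sup>\<dagger>T' - 1 = -Q\<close> with \<open>Q\<close> expanded in tensors having an antisymmetric
  factor, and \<open>1 - T\<^sup>\<dagger>T - Q = R \<ge> 0\<close>. Conversely, factoring \<open>1 - T\<^sup>\<dagger>T - Q\<close> as a Gram matrix and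
  appending its rows to \<open>T\<close> gives a dilation.

  Condition (3) is the dual of this semidefinite feasibility problem. Since \<open>Q\<close> is orthogonal to
  every admissible \<open>\<rho>\<close>, (2) gives \<open>tr[\<rho> T\<^sup>\<dagger>T] = 1 - tr[\<rho> R] \<le> 1\<close>. For the converse, the
  density matrices form a compact convex set, and a nearest-point argument separates them from the
  constraints of (2) with \<open>1 - T\<^sup>\<dagger>T\<close> replaced by \<open>1 - T\<^sup>\<dagger>T + \<epsilon>\<close>; the resulting certificates
  have zero trace, hence are bounded, and a convergent subsequence yields a certificate as
  \<open>\<epsilon> \<rightarrow> 0\<close>.
\<close>

section \<open>Sums over tuples\<close>

lemma sum_lists_prod:
  fixes f :: "nat \<Rightarrow> 'a \<Rightarrow> 'b::comm_semiring_1"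
  assumes "finite A"
  shows "(\<Sum>xs\<in>{xs. set xs \<subseteq> A \<and> length xs = n}. \<Prod>k<n. f k (xs ! k)) = (\<Prod>k<n. \<Sum>a\<in>A. f k a)"
proof (induction n arbitrary: f)
  case 0
  have "{xs. set xs \<subseteq> A \<and> length xs = 0} = {[]}" by auto
  then show ?case by simp
next
  case (Suc n)
  let ?L = "{xs. set xs \<subseteq> A \<and> length xs = n}"
  have "(\<Sum>xs\<in>{xs. set xs \<subseteq> A \<and> length xs = Suc n}. \<Prod>k<Suc n. f k (xs ! k))
      = (\<Sum>(xs, a)\<in>?L \<times> A. f 0 a * (\<Prod>k<n. f (Suc k) (xs ! k)))"
    unfolding lists_length_Suc_eq sum.reindex[OF inj_split_Cons]
    by (simp add: prod.lessThan_Suc_shift case_prod_beta del: prod.lessThan_Suc)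
  also have "\<dots> = (\<Sum>xs\<in>?L. \<Prod>k<n. f (Suc k) (xs ! k)) * (\<Sum>a\<in>A. f 0 a)"
    unfolding sum_product sum.cartesian_product[symmetric] by (simp add: mult.commute)
  also have "\<dots> = (\<Prod>k<Suc n. \<Sum>a\<in>A. f k a)"
    using Suc.IH[of "\<lambda>k. f (Suc k)"]
    by (simp add: prod.lessThan_Suc_shift mult.commute del: prod.lessThan_Suc)
  finally show ?case .
qed

lemma tuples_eq_lists: "tuples M N = {s. set s \<subseteq> {..<M} \<and> length s = N}"
  unfolding tuples_def by auto

lemma finite_tuples: "finite (tuples M N)"
  by (simp add: tuples_eq_lists finite_lists_length_eq)

lemma tuples_length: "s \<in> tuples M N \<Longrightarrow> length s = N"
  and tuples_nth_less: "s \<in> tuples M N \<Longrightarrow> k < N \<Longrightarrow> s ! k < M"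
  unfolding tuples_def by auto

lemma tuples_nonempty: "0 < M \<Longrightarrow> tuples M N \<noteq> {}"
  unfolding tuples_def by (auto intro!: exI[of _ "replicate N 0"])

lemma sum_tuples_prod: "(\<Sum>s\<in>tuples M N. \<Prod>k<N. f k (s ! k)) = (\<Prod>k<N. \<Sum>j<M. f k j :: real)"
  unfolding tuples_eq_lists by (rule sum_lists_prod) simp

lemma sum_tuples_prod2:
  "(\<Sum>s\<in>tuples M N. \<Sum>t\<in>tuples M N. \<Prod>k<N. f k (s ! k) (t ! k))
     = (\<Prod>k<N. \<Sum>i<M. \<Sum>j<M. f k i j :: real)"
proof -
  have "(\<Sum>s\<in>tuples M N. \<Sum>t\<in>tuples M N. \<Prod>k<N. f k (s ! k) (t ! k))
      = (\<Sum>s\<in>tuples M N. \<Prod>k<N. \<Sum>j<M. f k (s ! k) j)"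
    by (rule sum.cong[OF refl]) (rule sum_tuples_prod)
  also have "\<dots> = (\<Prod>k<N. \<Sum>i<M. \<Sum>j<M. f k i j)"
    by (rule sum_tuples_prod)
  finally show ?thesis .
qed

lemma prod_nth_indicator:
  assumes "length s = N" "length t = N"
  shows "(\<Prod>k<N. if s ! k = t ! k then 1 else 0 :: real) = (if s = t then 1 else 0)"
proof (cases "s = t")
  case False
  then obtain k where "k < N" "s ! k \<noteq> t ! k" using assms nth_equalityI by metis
  then show ?thesis using False by (intro trans[OF prod_zero]) auto
qed simp

lemma sum_mult_indicator: "finite I \<Longrightarrow> p \<in> I \<Longrightarrow> (\<Sum>t\<in>I. f t * (if t = p then 1 else 0)) = (f p :: real)"
  by (simp add: if_distrib[where f="\<lambda>c. _ * c"] cong: if_cong)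

lemma sum_sum_lessThan_indicator:
  fixes f :: "nat \<Rightarrow> nat \<Rightarrow> 'a::comm_monoid_add"
  assumes "a < M" "b < M"
  shows "(\<Sum>i<M. \<Sum>j<M. if i = a \<and> j = b then f i j else 0) = f a b"
proof -
  have "(\<Sum>j<M. if i = a \<and> j = b then f i j else 0) = (if i = a then f i b else 0)" for i
    using assms(2) by (cases "i = a") simp_all
  then show ?thesis using assms(1) by simp
qed

lemma sum_triple_product: "(\<Sum>p\<in>A \<times> B \<times> C. f p) = (\<Sum>a\<in>A. \<Sum>b\<in>B. \<Sum>c\<in>C. f (a, b, c))"
  by (simp add: sum.cartesian_product)

lemma sum_lessThan_add:
  fixes f :: "nat \<Rightarrow> 'a::comm_monoid_add"
  shows "(\<Sum>i<D + m. f i) = (\<Sum>i<D. f i) + (\<Sum>j<m. f (D + j))"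
  by (induction m) (simp_all add: algebra_simps)

section \<open>Quadratic forms and positive semidefinite matrices\<close>

definition quad_form :: "'i set \<Rightarrow> ('i \<Rightarrow> 'i \<Rightarrow> real) \<Rightarrow> ('i \<Rightarrow> real) \<Rightarrow> real" where
  "quad_form I A x = (\<Sum>s\<in>I. \<Sum>t\<in>I. x s * A s t * x t)"

definition mat_inner :: "'i set \<Rightarrow> ('i \<Rightarrow> 'i \<Rightarrow> real) \<Rightarrow> ('i \<Rightarrow> 'i \<Rightarrow> real) \<Rightarrow> real" where
  "mat_inner I A B = (\<Sum>s\<in>I. \<Sum>t\<in>I. A s t * B s t)"

lemma psd_on_iff_quad_form: "psd_on I A \<longleftrightarrow> msym_on I A \<and> (\<forall>x. 0 \<le> quad_form I A x)"
  unfolding psd_on_def quad_form_def ..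

lemma psd_on_imp_quad_form_nonneg: "psd_on I A \<Longrightarrow> 0 \<le> quad_form I A x"
  by (simp add: psd_on_iff_quad_form)

lemma psd_on_imp_msym_on: "psd_on I A \<Longrightarrow> msym_on I A"
  by (simp add: psd_on_iff_quad_form)

lemma quad_form_cong:
  "(\<And>s t. s \<in> I \<Longrightarrow> t \<in> I \<Longrightarrow> A s t = B s t) \<Longrightarrow> quad_form I A x = quad_form I B x"
  unfolding quad_form_def by (intro sum.cong refl) auto

lemma mat_inner_cong:
  "(\<And>s t. s \<in> I \<Longrightarrow> t \<in> I \<Longrightarrow> A s t = B s t) \<Longrightarrow> mat_inner I A C = mat_inner I B C"
  unfolding mat_inner_def by (intro sum.cong refl) auto

lemma psd_on_cong:
  "(\<And>s t. s \<in> I \<Longrightarrow> t \<in> I \<Longrightarrow> A s t = B s t) \<Longrightarrow> psd_on I A \<longleftrightarrow> psd_on I B"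
  unfolding psd_on_def msym_on_def by simp

lemma quad_form_add: "quad_form I (\<lambda>s t. A s t + B s t) x = quad_form I A x + quad_form I B x"
  unfolding quad_form_def by (simp add: algebra_simps sum.distrib)

lemma quad_form_diff: "quad_form I (\<lambda>s t. A s t - B s t) x = quad_form I A x - quad_form I B x"
  unfolding quad_form_def by (simp add: algebra_simps sum_subtractf)

lemma quad_form_scale: "quad_form I (\<lambda>s t. c * A s t) x = c * quad_form I A x"
  unfolding quad_form_def by (simp add: sum_distrib_left mult_ac)

lemma quad_form_sum: "quad_form I (\<lambda>s t. \<Sum>g\<in>S. F g s t) x = (\<Sum>g\<in>S. quad_form I (F g) x)"
  unfolding quad_form_def by (simp add: sum_distrib_left sum_distrib_right sum.swap[of _ S])

lemma quad_form_transpose: "quad_form I (\<lambda>s t. A t s) x = quad_form I A x"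
  unfolding quad_form_def by (subst sum.swap) (simp add: mult_ac)

lemma quad_form_idm: "finite I \<Longrightarrow> quad_form I idm x = (\<Sum>s\<in>I. (x s)\<^sup>2)"
  unfolding quad_form_def idm_def
  by (simp add: power2_eq_square if_distrib[where f="\<lambda>c. _ * c"] if_distrib[where f="\<lambda>c. c * _"]
      cong: if_cong)

lemma quad_form_rank_one: "quad_form I (\<lambda>s t. v s * v t) x = (\<Sum>s\<in>I. x s * v s)\<^sup>2"
  unfolding quad_form_def power2_eq_square sum_product by (simp add: mult_ac)

lemma quad_form_null_vector:
  assumes "finite I" "(\<Sum>s\<in>I. (x s)\<^sup>2) = 0"
  shows "quad_form I A x = 0"
proof -
  have "\<forall>s\<in>I. x s = 0" using assms by (simp add: sum_nonneg_eq_0_iff)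
  then show ?thesis by (simp add: quad_form_def)
qed

lemma quad_form_antisym_eq_zero:
  assumes "\<And>s t. s \<in> I \<Longrightarrow> t \<in> I \<Longrightarrow> H s t = - H t s"
  shows "quad_form I H x = 0"
proof -
  have "quad_form I H x = quad_form I (\<lambda>s t. (- 1) * H s t) x"
    by (subst quad_form_transpose[symmetric]) (rule quad_form_cong, subst assms, auto)
  then show ?thesis using quad_form_scale[of I "- 1" H x] by simp
qed

lemma mat_inner_add: "mat_inner I (\<lambda>s t. A s t + B s t) C = mat_inner I A C + mat_inner I B C"
  unfolding mat_inner_def by (simp add: algebra_simps sum.distrib)

lemma mat_inner_diff: "mat_inner I (\<lambda>s t. A s t - B s t) C = mat_inner I A C - mat_inner I B C"
  unfolding mat_inner_def by (simp add: algebra_simps sum_subtractf)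

lemma mat_inner_scale: "mat_inner I (\<lambda>s t. c * A s t) C = c * mat_inner I A C"
  unfolding mat_inner_def by (simp add: sum_distrib_left mult_ac)

lemma mat_inner_sum: "mat_inner I (\<lambda>s t. \<Sum>g\<in>S. F g s t) C = (\<Sum>g\<in>S. mat_inner I (F g) C)"
  unfolding mat_inner_def by (simp add: sum_distrib_right sum.swap[of _ S])

lemma mat_inner_commute: "mat_inner I A B = mat_inner I B A"
  unfolding mat_inner_def by (simp add: mult.commute)

lemma mat_inner_transpose: "mat_inner I (\<lambda>s t. A t s) B = mat_inner I A (\<lambda>s t. B t s)"
  unfolding mat_inner_def by (subst sum.swap) simp

lemma mat_inner_transpose_msym_on:
  assumes "msym_on I B"
  shows "mat_inner I (\<lambda>s t. A t s) B = mat_inner I A B"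
proof -
  have "mat_inner I A (\<lambda>s t. B t s) = mat_inner I A B"
    unfolding mat_inner_def using assms by (intro sum.cong refl) (simp add: msym_on_def)
  then show ?thesis by (simp add: mat_inner_transpose[of I A B])
qed

lemma mat_inner_idm: "finite I \<Longrightarrow> mat_inner I A idm = trace_on I A"
  unfolding mat_inner_def idm_def trace_on_def by (simp add: if_distrib cong: if_cong)

lemma mat_inner_rank_one: "mat_inner I A (\<lambda>s t. v s * v t) = quad_form I A v"
  unfolding mat_inner_def quad_form_def by (simp add: mult_ac)

lemma trace_on_mat_mult_on:
  "msym_on I B \<Longrightarrow> trace_on I (mat_mult_on I A B) = mat_inner I A B"
  unfolding trace_on_def mat_mult_on_def mat_inner_def msym_on_def by simp

lemma idm_commute: "idm s t = idm t s"
  unfolding idm_def by simp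

lemma quad_form_indicator:
  "finite I \<Longrightarrow> p \<in> I \<Longrightarrow> quad_form I A (\<lambda>s. if s = p then 1 else 0) = A p p"
  unfolding quad_form_def
  by (simp add: if_distrib[where f="\<lambda>c. c * _"] if_distrib[where f="\<lambda>c. _ * c"] cong: if_cong)

lemma bilinear_indicator:
  "finite I \<Longrightarrow> p \<in> I
   \<Longrightarrow> (\<Sum>s\<in>I. \<Sum>t\<in>I. (if s = p then 1 else 0) * A s t * x t) = (\<Sum>t\<in>I. A p t * x t :: real)"
proof -
  have "(if s = p then 1 else 0) * A s t * x t = (if s = p then A p t * x t else 0)" for s t
    by simp
  then show "finite I \<Longrightarrow> p \<in> I \<Longrightarrow> ?thesis" by (subst sum.swap) (simp add: sum.delta)
qed

lemma quad_form_add_scaled: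
  assumes "msym_on I A"
  shows "quad_form I A (\<lambda>s. x s + l * y s)
           = quad_form I A x + 2 * l * (\<Sum>s\<in>I. \<Sum>t\<in>I. y s * A s t * x t) + l\<^sup>2 * quad_form I A y"
proof -
  have swap: "(\<Sum>s\<in>I. \<Sum>t\<in>I. x s * A s t * y t) = (\<Sum>s\<in>I. \<Sum>t\<in>I. y s * A s t * x t)"
    using assms unfolding msym_on_def by (subst sum.swap) (auto intro!: sum.cong simp: mult_ac)
  have "quad_form I A (\<lambda>s. x s + l * y s)
      = quad_form I A x + l * (\<Sum>s\<in>I. \<Sum>t\<in>I. x s * A s t * y t)
        + l * (\<Sum>s\<in>I. \<Sum>t\<in>I. y s * A s t * x t) + l\<^sup>2 * quad_form I A y"
    unfolding quad_form_def
    by (simp add: algebra_simps power2_eq_square sum.distrib sum_distrib_left)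
  then show ?thesis by (simp add: swap)
qed

lemma discriminant_le_of_nonneg_quadratic:
  fixes a b c :: real
  assumes nonneg: "\<And>l. 0 \<le> c + 2 * l * b + l\<^sup>2 * a" and "0 \<le> a"
  shows "b\<^sup>2 \<le> a * c"
proof (cases "a = 0")
  case True
  have "b = 0"
  proof (rule ccontr)
    assume "b \<noteq> 0"
    then have "c + 2 * (- (c + 1) / (2 * b)) * b + (- (c + 1) / (2 * b))\<^sup>2 * a = -1"
      using True by (simp add: field_simps)
    then show False using nonneg[of "- (c + 1) / (2 * b)"] by simp
  qed
  then show ?thesis using True by simp
next
  case False
  then have "0 < a" using \<open>0 \<le> a\<close> by simp
  have "c + 2 * (- b / a) * b + (- b / a)\<^sup>2 * a = c - b\<^sup>2 / a"
    using \<open>0 < a\<close> by (simp add: field_simps power2_eq_square)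
  then have "b\<^sup>2 / a \<le> c" using nonneg[of "- b / a"] by simp
  then show ?thesis using \<open>0 < a\<close> by (simp add: field_simps)
qed

lemma psd_on_diag_nonneg: "finite I \<Longrightarrow> p \<in> I \<Longrightarrow> psd_on I A \<Longrightarrow> 0 \<le> A p p"
  using psd_on_imp_quad_form_nonneg quad_form_indicator by metis

lemma psd_on_row_bound:
  assumes I: "finite I" "p \<in> I" and A: "psd_on I A"
  shows "(\<Sum>t\<in>I. A p t * x t)\<^sup>2 \<le> A p p * quad_form I A x"
proof (rule discriminant_le_of_nonneg_quadratic)
  fix l
  define e where "e s = (if s = p then 1 else 0 :: real)" for s
  have "0 \<le> quad_form I A (\<lambda>s. x s + l * e s)"
    using A by (rule psd_on_imp_quad_form_nonneg)
  also have "\<dots> = quad_form I A x + 2 * l * (\<Sum>t\<in>I. A p t * x t) + l\<^sup>2 * A p p"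
    unfolding quad_form_add_scaled[OF psd_on_imp_msym_on[OF A]]
    using I by (simp add: e_def quad_form_indicator bilinear_indicator)
  finally show "0 \<le> quad_form I A x + 2 * l * (\<Sum>t\<in>I. A p t * x t) + l\<^sup>2 * A p p" .
qed (rule psd_on_diag_nonneg[OF I A])

lemma psd_on_entry_bound:
  assumes "finite I" "s \<in> I" "t \<in> I" "psd_on I A"
  shows "(A s t)\<^sup>2 \<le> A s s * A t t"
  using psd_on_row_bound[OF assms(1,2,4), of "\<lambda>u. if u = t then 1 else 0"] assms
  by (simp add: sum_mult_indicator quad_form_indicator)

lemma psd_on_shifted_entry_bound:
  fixes Z Q :: "'i \<Rightarrow> 'i \<Rightarrow> real"
  assumes I: "finite I" and st: "s \<in> I" "t \<in> I" and trQ: "trace_on I Q = 0"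
    and A: "psd_on I (\<lambda>s t. Z s t + e * idm s t - Q s t)" and e: "0 \<le> e" "e \<le> 1"
  shows "\<bar>Q s t\<bar> \<le> \<bar>Z s t\<bar> + 1 + 2 * (\<Sum>u\<in>I. \<bar>Z u u\<bar> + 1)"
proof -
  define W where "W = (\<Sum>u\<in>I. \<bar>Z u u\<bar> + 1)"
  let ?A = "\<lambda>s t. Z s t + e * idm s t - Q s t"
  have W: "\<bar>Z u u\<bar> + 1 \<le> W" if "u \<in> I" for u
    unfolding W_def using I that by (intro member_le_sum) auto
  have A_diag: "0 \<le> Z u u + e - Q u u" if "u \<in> I" for u
    using psd_on_diag_nonneg[OF I that A] by (simp add: idm_def)
  then have Q_upper: "Q u u \<le> \<bar>Z u u\<bar> + 1" if "u \<in> I" for u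
    using that e by fastforce
  have Q_lower: "- W \<le> Q u u" if u: "u \<in> I" for u
  proof -
    have "0 = Q u u + (\<Sum>v\<in>I - {u}. Q v v)"
      using trQ sum.remove[OF I u, of "\<lambda>v. Q v v"] by (simp add: trace_on_def)
    moreover have "(\<Sum>v\<in>I - {u}. Q v v) \<le> (\<Sum>v\<in>I - {u}. \<bar>Z v v\<bar> + 1)"
      using Q_upper by (intro sum_mono) auto
    moreover have "(\<Sum>v\<in>I - {u}. \<bar>Z v v\<bar> + 1) \<le> W"
      unfolding W_def using I by (intro sum_mono2) auto
    ultimately show ?thesis by linarith
  qed
  have A_bound: "?A u u \<le> 2 * W" if u: "u \<in> I" for u
    using Q_lower[OF u] W[OF u] e by (simp add: idm_def)
  have "(?A s t)\<^sup>2 \<le> ?A s s * ?A t t" by (rule psd_on_entry_bound[OF I st A])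
  also have "\<dots> \<le> (2 * W) * (2 * W)"
    using A_bound st A_diag W[OF st(1)] by (intro mult_mono) (auto simp: idm_def)
  finally have "(?A s t)\<^sup>2 \<le> (2 * W)\<^sup>2" by (simp add: power2_eq_square)
  then have "\<bar>?A s t\<bar> \<le> 2 * W"
    using W[OF st(1)] power2_le_iff_abs_le[of "2 * W" "?A s t"] by linarith
  moreover have "\<bar>e * idm s t\<bar> \<le> 1" using e by (simp add: idm_def)
  ultimately show ?thesis unfolding W_def[symmetric] by linarith
qed

lemma quad_form_extend_zero:
  assumes "finite I" "F \<subseteq> I"
  shows "quad_form I A (\<lambda>s. if s \<in> F then x s else 0) = quad_form F A x"
proof -
  have "quad_form I A (\<lambda>s. if s \<in> F then x s else 0)
      = (\<Sum>s\<in>I. if s \<in> F then (\<Sum>t\<in>I. if t \<in> F then x s * A s t * x t else 0) else 0)"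
    unfolding quad_form_def by (auto intro!: sum.cong)
  then show ?thesis
    using assms by (simp add: sum.inter_restrict[symmetric] Int_absorb1 quad_form_def)
qed

lemma psd_on_subset: "finite I \<Longrightarrow> F \<subseteq> I \<Longrightarrow> psd_on I A \<Longrightarrow> psd_on F A"
  unfolding psd_on_iff_quad_form msym_on_def
  by (metis quad_form_extend_zero subsetD)

lemma psd_on_gram: "psd_on I (\<lambda>s t. \<Sum>i\<in>K. S i s * S i t)"
  unfolding psd_on_iff_quad_form msym_on_def
  by (simp add: quad_form_sum quad_form_rank_one sum_nonneg mult.commute)

text \<open>One step of a Cholesky factorisation: splitting off the rank-one part carried by row \<open>p\<close>.\<close>
lemma psd_on_deflate:
  assumes I: "finite I" "p \<in> I" and A: "psd_on I A"
  defines "v \<equiv> \<lambda>t. if A p p = 0 then 0 else A p t / sqrt (A p p)"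
  shows "psd_on I (\<lambda>s t. A s t - v s * v t)"
    and "\<And>t. t \<in> I \<Longrightarrow> v p * v t = A p t"
proof -
  have App: "0 \<le> A p p" by (rule psd_on_diag_nonneg[OF I A])
  have "(\<Sum>s\<in>I. x s * v s)\<^sup>2 \<le> quad_form I A x" for x
  proof (cases "A p p = 0")
    case True
    then show ?thesis using psd_on_imp_quad_form_nonneg[OF A] by (simp add: v_def)
  next
    case False
    then have "(\<Sum>s\<in>I. x s * v s)\<^sup>2 = (\<Sum>t\<in>I. A p t * x t)\<^sup>2 / A p p"
      using App by (simp add: v_def sum_divide_distrib[symmetric] power_divide mult.commute)
    also have "\<dots> \<le> quad_form I A x"
      using psd_on_row_bound[OF I A, of x] App False by (simp add: divide_le_eq mult.commute)
    finally show ?thesis .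
  qed
  moreover have "msym_on I (\<lambda>s t. A s t - v s * v t)"
    using psd_on_imp_msym_on[OF A] by (simp add: msym_on_def mult.commute)
  ultimately show "psd_on I (\<lambda>s t. A s t - v s * v t)"
    by (simp add: psd_on_iff_quad_form quad_form_diff quad_form_rank_one)
  fix t assume t: "t \<in> I"
  show "v p * v t = A p t"
  proof (cases "A p p = 0")
    case True
    then have "(A p t)\<^sup>2 \<le> 0" using psd_on_entry_bound[OF I(1,2) t A] by simp
    then show ?thesis using True by (simp add: v_def)
  next
    case False
    then show ?thesis using App by (simp add: v_def)
  qed
qed

lemma psd_on_gram_factor:
  assumes "finite I" "psd_on I A"
  shows "\<exists>(m::nat) S. \<forall>s\<in>I. \<forall>t\<in>I. A s t = (\<Sum>i<m. S i s * S i t)"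
  using assms
proof (induction I arbitrary: A rule: finite_induct)
  case empty
  then show ?case by simp
next
  case (insert p F)
  let ?J = "insert p F"
  define v where "v t = (if A p p = 0 then 0 else A p t / sqrt (A p p))" for t
  have finJ: "finite ?J" "p \<in> ?J" using insert.hyps by auto
  note deflate = psd_on_deflate[OF finJ insert.prems, folded v_def]
  have "psd_on F (\<lambda>s t. A s t - v s * v t)"
    using psd_on_subset[OF finJ(1) _ deflate(1)] by blast
  from insert.IH[OF this]
  obtain m :: nat and S where S: "\<forall>s\<in>F. \<forall>t\<in>F. A s t - v s * v t = (\<Sum>i<m. S i s * S i t)"
    by blast
  define S' where "S' i s = (if i < m then (if s = p then 0 else S i s) else v s)" for i s
  have "A s t = (\<Sum>i<Suc m. S' i s * S' i t)" if st: "s \<in> ?J" "t \<in> ?J" for s t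
  proof -
    have S'_sum: "(\<Sum>i<Suc m. S' i s * S' i t)
        = (\<Sum>i<m. (if s = p then 0 else S i s) * (if t = p then 0 else S i t)) + v s * v t"
      unfolding S'_def by simp
    consider "s = p" | "t = p" "s \<noteq> p" | "s \<in> F" "t \<in> F" "s \<noteq> p" "t \<noteq> p"
      using st by auto
    then show ?thesis
    proof cases
      case 1
      then show ?thesis using S'_sum deflate(2)[OF st(2)] by simp
    next
      case 2
      have "A s p = A p s"
        using psd_on_imp_msym_on[OF insert.prems] st unfolding msym_on_def by auto
      then show ?thesis using 2 S'_sum deflate(2)[OF st(1)] by (simp add: mult.commute)
    next
      case 3
      then show ?thesis using S'_sum S by force
    qed
  qed
  then show ?case by blast
qed

lemma mat_inner_psd_nonneg:
  assumes I: "finite I" and A: "psd_on I A" and B: "psd_on I B"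
  shows "0 \<le> mat_inner I A B"
proof -
  obtain m :: nat and S where S: "\<forall>s\<in>I. \<forall>t\<in>I. B s t = (\<Sum>i<m. S i s * S i t)"
    using psd_on_gram_factor[OF I B] by blast
  have "mat_inner I A B = mat_inner I (\<lambda>s t. \<Sum>i<m. S i s * S i t) A"
    using S by (subst mat_inner_commute) (rule mat_inner_cong; simp)
  also have "\<dots> = (\<Sum>i<m. quad_form I A (S i))"
    by (simp add: mat_inner_sum mat_inner_commute[of I _ A] mat_inner_rank_one)
  finally show ?thesis
    using psd_on_imp_quad_form_nonneg[OF A] by (simp add: sum_nonneg)
qed

section \<open>Density matrices\<close>

definition density_on :: "'i set \<Rightarrow> ('i \<Rightarrow> 'i \<Rightarrow> real) \<Rightarrow> bool" where
  "density_on I \<rho> \<longleftrightarrow> psd_on I \<rho> \<and> trace_on I \<rho> = 1"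

lemma density_on_entry_bound:
  assumes I: "finite I" and \<rho>: "density_on I \<rho>" and st: "s \<in> I" "t \<in> I"
  shows "\<bar>\<rho> s t\<bar> \<le> 1"
proof -
  have psd: "psd_on I \<rho>" using \<rho> by (simp add: density_on_def)
  have diag: "0 \<le> \<rho> u u \<and> \<rho> u u \<le> 1" if "u \<in> I" for u
  proof
    show "0 \<le> \<rho> u u" using psd_on_diag_nonneg[OF I that psd] .
    have "\<rho> u u \<le> trace_on I \<rho>"
      unfolding trace_on_def using I that psd_on_diag_nonneg[OF I _ psd] by (intro member_le_sum) auto
    then show "\<rho> u u \<le> 1" using \<rho> by (simp add: density_on_def)
  qed
  have "(\<rho> s t)\<^sup>2 \<le> \<rho> s s * \<rho> t t" by (rule psd_on_entry_bound[OF I st psd])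
  also have "\<dots> \<le> 1" using diag[OF st(1)] diag[OF st(2)] by (simp add: mult_le_one)
  finally show ?thesis by (simp add: abs_square_le_1)
qed

lemma density_on_convex:
  assumes "density_on I \<rho>" "density_on I \<sigma>" "0 \<le> c" "c \<le> 1"
  shows "density_on I (\<lambda>s t. \<rho> s t + c * (\<sigma> s t - \<rho> s t))"
proof -
  have "quad_form I (\<lambda>s t. \<rho> s t + c * (\<sigma> s t - \<rho> s t)) x
      = (1 - c) * quad_form I \<rho> x + c * quad_form I \<sigma> x" for x
    by (simp add: quad_form_add quad_form_scale quad_form_diff algebra_simps)
  moreover have "trace_on I (\<lambda>s t. \<rho> s t + c * (\<sigma> s t - \<rho> s t))
      = trace_on I \<rho> + c * (trace_on I \<sigma> - trace_on I \<rho>)"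
    unfolding trace_on_def by (simp add: sum.distrib sum_subtractf sum_distrib_left right_diff_distrib)
  ultimately show ?thesis
    using assms unfolding density_on_def psd_on_iff_quad_form msym_on_def by simp
qed

lemma density_on_rank_one:
  assumes "finite I" and pos: "0 < (\<Sum>s\<in>I. (x s)\<^sup>2)"
  shows "density_on I (\<lambda>s t. x s * x t / (\<Sum>s\<in>I. (x s)\<^sup>2))"
proof -
  let ?n = "\<Sum>s\<in>I. (x s)\<^sup>2"
  have "quad_form I (\<lambda>s t. x s * x t / ?n) y = (\<Sum>s\<in>I. y s * x s)\<^sup>2 / ?n" for y
    using quad_form_scale[of I "1 / ?n" "\<lambda>s t. x s * x t" y] by (simp add: quad_form_rank_one)
  then have "psd_on I (\<lambda>s t. x s * x t / ?n)"
    using pos by (simp add: psd_on_iff_quad_form msym_on_def mult.commute)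
  moreover have "trace_on I (\<lambda>s t. x s * x t / ?n) = 1"
    unfolding trace_on_def using pos by (simp add: sum_divide_distrib[symmetric] power2_eq_square)
  ultimately show ?thesis unfolding density_on_def by simp
qed

lemma mat_inner_rank_one_density:
  "mat_inner I (\<lambda>s t. x s * x t / n) A = quad_form I A x / n"
  unfolding mat_inner_def quad_form_def by (simp add: sum_divide_distrib mult_ac)

lemma psd_on_if_mat_inner_density_nonneg:
  assumes I: "finite I" and W: "msym_on I W"
    and nonneg: "\<And>\<rho>. density_on I \<rho> \<Longrightarrow> 0 \<le> mat_inner I W \<rho>"
  shows "psd_on I W"
  unfolding psd_on_iff_quad_form
proof (intro conjI allI)
  show "msym_on I W" by (rule W)
  fix x :: "'a \<Rightarrow> real"
  show "0 \<le> quad_form I W x"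
  proof (cases "(\<Sum>s\<in>I. (x s)\<^sup>2) = 0")
    case True
    then show ?thesis by (simp add: quad_form_null_vector I)
  next
    case False
    then have n: "0 < (\<Sum>s\<in>I. (x s)\<^sup>2)" by (simp add: sum_nonneg order_less_le)
    have "0 \<le> mat_inner I W (\<lambda>s t. x s * x t / (\<Sum>s\<in>I. (x s)\<^sup>2))"
      by (rule nonneg[OF density_on_rank_one[OF I n]])
    then show ?thesis
      using n by (simp add: mat_inner_commute[of I W] mat_inner_rank_one_density zero_le_divide_iff)
  qed
qed

lemma density_on_maximally_mixed:
  assumes "finite I" "I \<noteq> {}"
  shows "density_on I (\<lambda>s t. idm s t / real (card I))"
proof -
  have "quad_form I (\<lambda>s t. idm s t / real (card I)) x = quad_form I idm x / real (card I)" for x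
    using quad_form_scale[of I "1 / real (card I)" idm x] by simp
  then have "psd_on I (\<lambda>s t. idm s t / real (card I))"
    using assms by (simp add: psd_on_iff_quad_form quad_form_idm msym_on_def idm_def sum_nonneg)
  moreover have "trace_on I (\<lambda>s t. idm s t / real (card I)) = 1"
    using assms by (simp add: trace_on_def idm_def)
  ultimately show ?thesis unfolding density_on_def by simp
qed

lemma mat_inner_maximally_mixed:
  "finite I \<Longrightarrow> mat_inner I (\<lambda>s t. idm s t / real (card I)) A = trace_on I A / real (card I)"
  using mat_inner_scale[of I "1 / real (card I)" idm A]
  by (simp add: mat_inner_commute[of I idm] mat_inner_idm)

lemma mat_inner_density_shift:
  assumes "finite I" "density_on I \<rho>"
  shows "mat_inner I (\<lambda>s t. Z s t + c * idm s t) \<rho> = mat_inner I Z \<rho> + c"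
  using assms mat_inner_idm[OF assms(1), where A = \<rho>]
  by (simp add: mat_inner_add mat_inner_scale mat_inner_commute[of I idm] density_on_def)

lemma convergent_subseq_of_bounded:
  fixes f :: "nat \<Rightarrow> 'p \<Rightarrow> real"
  assumes "finite P" "\<forall>p\<in>P. \<exists>C. \<forall>n. \<bar>f n p\<bar> \<le> C"
  shows "\<exists>r. strict_mono r \<and> (\<forall>p\<in>P. convergent (\<lambda>n. f (r n) p))"
  using assms
proof (induction P rule: finite_induct)
  case empty
  show ?case by (intro exI[of _ id]) (simp add: strict_mono_def)
next
  case (insert q P)
  obtain r1 where r1: "strict_mono r1" "\<forall>p\<in>P. convergent (\<lambda>n. f (r1 n) p)"
    using insert by auto
  obtain C where C: "\<forall>n. \<bar>f n q\<bar> \<le> C" using insert.prems by auto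
  obtain r2 where r2: "strict_mono r2" "monoseq (\<lambda>n. f (r1 (r2 n)) q)"
    using seq_monosub[of "\<lambda>n. f (r1 n) q"] by blast
  have "Bseq (\<lambda>n. f (r1 (r2 n)) q)" using C by (intro BseqI'[of _ C]) simp
  then have q: "convergent (\<lambda>n. f (r1 (r2 n)) q)" using r2(2) by (rule Bseq_monoseq_convergent)
  have "convergent (\<lambda>n. f (r1 (r2 n)) p)" if "p \<in> P" for p
    using convergent_subseq_convergent[OF r1(2)[rule_format, OF that] r2(1)] by (simp add: o_def)
  then show ?case
    using q strict_mono_o[OF r1(1) r2(1)] by (intro exI[of _ "r1 \<circ> r2"]) (auto simp: o_def)
qed

lemma matrix_seq_convergent_subseq:
  fixes X :: "nat \<Rightarrow> 'i \<Rightarrow> 'i \<Rightarrow> real"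
  assumes "finite I" "\<And>s t. s \<in> I \<Longrightarrow> t \<in> I \<Longrightarrow> \<exists>C. \<forall>n. \<bar>X n s t\<bar> \<le> C"
  shows "\<exists>r Y. strict_mono r \<and> (\<forall>s\<in>I. \<forall>t\<in>I. (\<lambda>n. X (r n) s t) \<longlonglongrightarrow> Y s t)"
proof -
  obtain r where r: "strict_mono r" "\<forall>p\<in>I \<times> I. convergent (\<lambda>n. case_prod (X (r n)) p)"
    using convergent_subseq_of_bounded[of "I \<times> I" "\<lambda>n. case_prod (X n)"] assms by auto
  then have "\<forall>s\<in>I. \<forall>t\<in>I. (\<lambda>n. X (r n) s t) \<longlonglongrightarrow> lim (\<lambda>n. X (r n) s t)"
    by (auto simp: convergent_LIMSEQ_iff)
  then show ?thesis using r(1) by (intro exI[of _ r] exI[of _ "\<lambda>s t. lim (\<lambda>n. X (r n) s t)"]) simp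
qed

lemma tendsto_mat_inner:
  assumes "\<forall>s\<in>I. \<forall>t\<in>I. (\<lambda>n. X n s t) \<longlonglongrightarrow> Y s t"
  shows "(\<lambda>n. mat_inner I (X n) B) \<longlonglongrightarrow> mat_inner I Y B"
  unfolding mat_inner_def using assms by (intro tendsto_sum tendsto_mult tendsto_const) auto

lemma tendsto_quad_form:
  assumes "\<forall>s\<in>I. \<forall>t\<in>I. (\<lambda>n. X n s t) \<longlonglongrightarrow> Y s t"
  shows "(\<lambda>n. quad_form I (X n) x) \<longlonglongrightarrow> quad_form I Y x"
  unfolding quad_form_def using assms by (intro tendsto_sum tendsto_mult tendsto_const) auto

lemma msym_on_limit:
  assumes "\<forall>s\<in>I. \<forall>t\<in>I. (\<lambda>n. X n s t) \<longlonglongrightarrow> Y s t" "\<And>n. msym_on I (X n)"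
  shows "msym_on I Y"
  unfolding msym_on_def
proof (intro ballI)
  fix s t assume "s \<in> I" "t \<in> I"
  then have "(\<lambda>n. X n s t) = (\<lambda>n. X n t s)" using assms(2) by (simp add: msym_on_def)
  then have "(\<lambda>n. X n s t) \<longlonglongrightarrow> Y t s" using assms(1) \<open>s \<in> I\<close> \<open>t \<in> I\<close> by simp
  then show "Y s t = Y t s" using assms(1) \<open>s \<in> I\<close> \<open>t \<in> I\<close> LIMSEQ_unique by blast
qed

lemma psd_on_limit:
  assumes lim: "\<forall>s\<in>I. \<forall>t\<in>I. (\<lambda>n. X n s t) \<longlonglongrightarrow> Y s t" and psd: "\<And>n. psd_on I (X n)"
  shows "psd_on I Y"
  unfolding psd_on_iff_quad_form
proof (intro conjI allI)
  show "msym_on I Y" using msym_on_limit[OF lim psd_on_imp_msym_on[OF psd]] .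
  show "0 \<le> quad_form I Y x" for x
    by (rule LIMSEQ_le_const[OF tendsto_quad_form[OF lim]])
      (use psd_on_imp_quad_form_nonneg[OF psd] in blast)
qed

lemma density_on_limit:
  assumes lim: "\<forall>s\<in>I. \<forall>t\<in>I. (\<lambda>n. X n s t) \<longlonglongrightarrow> Y s t" and dens: "\<And>n. density_on I (X n)"
  shows "density_on I Y"
proof -
  have "(\<lambda>n. trace_on I (X n)) \<longlonglongrightarrow> trace_on I Y"
    unfolding trace_on_def using lim by (intro tendsto_sum) auto
  then have "trace_on I Y = 1" using dens by (simp add: density_on_def LIMSEQ_const_iff)
  then show ?thesis using psd_on_limit[OF lim] dens by (simp add: density_on_def)
qed

lemma density_on_min_sum_squares:
  fixes B :: "'k \<Rightarrow> 'i \<Rightarrow> 'i \<Rightarrow> real"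
  assumes I: "finite I" and "density_on I \<rho>1"
  shows "\<exists>\<rho>0. density_on I \<rho>0 \<and> (\<forall>\<rho>. density_on I \<rho> \<longrightarrow>
           (\<Sum>k\<in>K. (mat_inner I \<rho>0 (B k))\<^sup>2) \<le> (\<Sum>k\<in>K. (mat_inner I \<rho> (B k))\<^sup>2))"
proof -
  define F where "F \<rho> = (\<Sum>k\<in>K. (mat_inner I \<rho> (B k))\<^sup>2)" for \<rho>
  let ?S = "F ` {\<rho>. density_on I \<rho>}"
  have ne: "?S \<noteq> {}" using assms(2) by blast
  have bdd: "bdd_below ?S" unfolding F_def by (intro bdd_belowI[of _ 0]) (auto intro: sum_nonneg)
  have "\<exists>\<rho>. density_on I \<rho> \<and> F \<rho> < Inf ?S + 1 / Suc n" for n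
  proof -
    have "Inf ?S < Inf ?S + 1 / Suc n" by simp
    then show ?thesis using cInf_less_iff[OF ne bdd] by blast
  qed
  then obtain \<rho>s where \<rho>s: "\<And>n. density_on I (\<rho>s n)" "\<And>n. F (\<rho>s n) < Inf ?S + 1 / Suc n"
    by metis
  obtain r \<rho>0 where r: "strict_mono r" and lim: "\<forall>s\<in>I. \<forall>t\<in>I. (\<lambda>n. \<rho>s (r n) s t) \<longlonglongrightarrow> \<rho>0 s t"
    using matrix_seq_convergent_subseq[OF I, of \<rho>s] density_on_entry_bound[OF I \<rho>s(1)] by metis
  have \<rho>0: "density_on I \<rho>0" using density_on_limit[OF lim \<rho>s(1)] .
  have "F (\<rho>s (r n)) \<le> Inf ?S + 1 / Suc n" for n
  proof -
    have "1 / real (Suc (r n)) \<le> 1 / Suc n"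
      using seq_suble[OF r] by (simp add: frac_le)
    then show ?thesis using \<rho>s(2)[of "r n"] by linarith
  qed
  moreover have "(\<lambda>n. F (\<rho>s (r n))) \<longlonglongrightarrow> F \<rho>0"
    unfolding F_def by (intro tendsto_sum tendsto_power tendsto_mat_inner[OF lim])
  moreover have "(\<lambda>n. Inf ?S + 1 / Suc n) \<longlonglongrightarrow> Inf ?S"
    using tendsto_add[OF tendsto_const lim_1_over_n] LIMSEQ_Suc by fastforce
  ultimately have "F \<rho>0 \<le> Inf ?S" using LIMSEQ_le by blast
  moreover have "Inf ?S \<le> F \<rho>" if "density_on I \<rho>" for \<rho>
    using that bdd by (intro cInf_lower) auto
  ultimately show ?thesis using \<rho>0 unfolding F_def by force
qed

lemma nonneg_of_quadratic_nonneg_near_zero: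
  fixes a b :: real
  assumes "\<And>t. 0 < t \<Longrightarrow> t \<le> 1 \<Longrightarrow> 0 \<le> 2 * t * a + t\<^sup>2 * b"
  shows "0 \<le> a"
proof (rule ccontr)
  assume "\<not> 0 \<le> a"
  define t where "t = min 1 (- a / (\<bar>b\<bar> + 1))"
  have "0 < - a / (\<bar>b\<bar> + 1)" using \<open>\<not> 0 \<le> a\<close> by (intro divide_pos_pos) auto
  then have t: "0 < t" "t \<le> 1" by (auto simp: t_def)
  have "t \<le> - a / (\<bar>b\<bar> + 1)" by (simp add: t_def)
  then have "t * (\<bar>b\<bar> + 1) \<le> - a" by (subst (asm) pos_le_divide_eq) auto
  then have "t * \<bar>b\<bar> + t \<le> - a" by (simp add: algebra_simps)
  moreover have "t * b \<le> t * \<bar>b\<bar>" using t by (simp add: mult_left_mono)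
  ultimately have "t * b < - a" using t by linarith
  then have "t * (t * b) < t * (- a)" using t by (intro mult_strict_left_mono)
  then have "2 * t * a + t\<^sup>2 * b < t * a" by (simp add: power2_eq_square algebra_simps)
  also have "\<dots> < 0" using t \<open>\<not> 0 \<le> a\<close> by (simp add: mult_pos_neg)
  finally show False using assms[OF t] by simp
qed

text \<open>The coefficients are the coordinates \<open>mat_inner I \<rho>0 (B k)\<close> of a density matrix \<open>\<rho>0\<close>
  nearest to the origin in these coordinates; minimality against \<open>\<rho>0 + t (\<rho> - \<rho>0)\<close> for small
  \<open>t > 0\<close> gives the strict inequality.\<close>
lemma density_on_separation:
  fixes B :: "'k \<Rightarrow> 'i \<Rightarrow> 'i \<Rightarrow> real"
  assumes I: "finite I" and K: "finite K"
    and no_common_zero: "\<And>\<rho>. density_on I \<rho> \<Longrightarrow> \<exists>k\<in>K. mat_inner I \<rho> (B k) \<noteq> 0"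
  shows "\<exists>a. \<forall>\<rho>. density_on I \<rho> \<longrightarrow> 0 < (\<Sum>k\<in>K. a k * mat_inner I \<rho> (B k))"
proof (cases "\<exists>\<rho>. density_on I \<rho>")
  case False
  then show ?thesis by blast
next
  case True
  then obtain \<rho>0 where \<rho>0: "density_on I \<rho>0"
    and min: "\<And>\<rho>. density_on I \<rho> \<Longrightarrow>
                (\<Sum>k\<in>K. (mat_inner I \<rho>0 (B k))\<^sup>2) \<le> (\<Sum>k\<in>K. (mat_inner I \<rho> (B k))\<^sup>2)"
    using density_on_min_sum_squares[OF I] by metis
  define a where "a k = mat_inner I \<rho>0 (B k)" for k
  have pos: "0 < (\<Sum>k\<in>K. (a k)\<^sup>2)"
  proof -
    obtain k where "k \<in> K" "a k \<noteq> 0" using no_common_zero[OF \<rho>0] by (auto simp: a_def)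
    then show ?thesis using K by (intro sum_pos2) auto
  qed
  have "0 < (\<Sum>k\<in>K. a k * mat_inner I \<rho> (B k))" if \<rho>: "density_on I \<rho>" for \<rho>
  proof -
    define b where "b k = mat_inner I \<rho> (B k) - a k" for k
    have "0 \<le> 2 * t * (\<Sum>k\<in>K. a k * b k) + t\<^sup>2 * (\<Sum>k\<in>K. (b k)\<^sup>2)" if t: "0 < t" "t \<le> 1" for t
    proof -
      let ?\<rho>t = "\<lambda>s u. \<rho>0 s u + t * (\<rho> s u - \<rho>0 s u)"
      have "(\<Sum>k\<in>K. (a k)\<^sup>2) \<le> (\<Sum>k\<in>K. (mat_inner I ?\<rho>t (B k))\<^sup>2)"
        unfolding a_def using t by (intro min density_on_convex[OF \<rho>0 \<rho>]) auto
      also have "\<dots> = (\<Sum>k\<in>K. (a k + t * b k)\<^sup>2)"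
        by (simp add: mat_inner_add mat_inner_scale mat_inner_diff a_def b_def)
      also have "\<dots> = (\<Sum>k\<in>K. (a k)\<^sup>2) + (2 * t * (\<Sum>k\<in>K. a k * b k) + t\<^sup>2 * (\<Sum>k\<in>K. (b k)\<^sup>2))"
        by (simp add: power2_sum power_mult_distrib sum.distrib sum_distrib_left mult_ac)
      finally show ?thesis by simp
    qed
    then have "0 \<le> (\<Sum>k\<in>K. a k * b k)" by (rule nonneg_of_quadratic_nonneg_near_zero)
    moreover have "(\<Sum>k\<in>K. a k * mat_inner I \<rho> (B k)) = (\<Sum>k\<in>K. (a k)\<^sup>2) + (\<Sum>k\<in>K. a k * b k)"
      by (simp add: b_def power2_eq_square right_diff_distrib sum_subtractf)
    ultimately show ?thesis using pos by linarith
  qed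
  then show ?thesis by blast
qed

section \<open>Tensor products of the basis\<close>

lemma
  assumes "valid_G_basis M \<Gamma> G"
  shows valid_G_basis_finite: "finite \<Gamma>"
    and valid_G_basis_zero: "0 \<in> \<Gamma>"
    and valid_G_basis_pos: "0 < M"
    and valid_G_basis_identity: "i < M \<Longrightarrow> j < M \<Longrightarrow> G 0 i j = (if i = j then 1 else 0)"
    and valid_G_basis_sym: "\<gamma> \<in> \<Gamma> \<Longrightarrow> 0 \<le> \<gamma> \<Longrightarrow> i < M \<Longrightarrow> j < M \<Longrightarrow> G \<gamma> i j = G \<gamma> j i"
    and valid_G_basis_antisym: "\<gamma> \<in> \<Gamma> \<Longrightarrow> \<gamma> < 0 \<Longrightarrow> i < M \<Longrightarrow> j < M \<Longrightarrow> G \<gamma> i j = - G \<gamma> j i"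
    and valid_G_basis_orth: "\<gamma> \<in> \<Gamma> \<Longrightarrow> \<gamma>' \<in> \<Gamma> \<Longrightarrow> \<gamma> \<noteq> \<gamma>' \<Longrightarrow> mtr M (G \<gamma>) (G \<gamma>') = 0"
    and valid_G_basis_norm: "\<gamma> \<in> \<Gamma> \<Longrightarrow> \<gamma> \<noteq> 0 \<Longrightarrow> mtr M (G \<gamma>) (G \<gamma>) = 2"
    and valid_G_basis_spans: "\<exists>a. \<forall>i<M. \<forall>j<M. X i j = (\<Sum>\<gamma>\<in>\<Gamma>. a \<gamma> * G \<gamma> i j)"
proof -
  \<comment> \<open>\<open>spans\<close> must stay out of the simplifier: as a rewrite rule \<open>X i j = \<dots>\<close> it loops.\<close>
  have fin: "finite \<Gamma>" and card: "card \<Gamma> = M\<^sup>2" and zero: "0 \<in> \<Gamma>"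
    and id: "\<forall>i<M. \<forall>j<M. G 0 i j = (if i = j then 1 else 0)"
    and sym: "\<forall>\<gamma>\<in>\<Gamma>. \<gamma> \<ge> 0 \<longrightarrow> (\<forall>i<M. \<forall>j<M. G \<gamma> i j = G \<gamma> j i)"
    and antisym: "\<forall>\<gamma>\<in>\<Gamma>. \<gamma> < 0 \<longrightarrow> (\<forall>i<M. \<forall>j<M. G \<gamma> i j = - G \<gamma> j i)"
    and orth: "\<forall>\<gamma>\<in>\<Gamma>. \<forall>\<gamma>'\<in>\<Gamma>. \<gamma> \<noteq> \<gamma>' \<longrightarrow> mtr M (G \<gamma>) (G \<gamma>') = 0"
    and norm: "\<forall>\<gamma>\<in>\<Gamma>. \<gamma> \<noteq> 0 \<longrightarrow> mtr M (G \<gamma>) (G \<gamma>) = 2"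
    and spans: "\<forall>X :: nat \<Rightarrow> nat \<Rightarrow> real. \<exists>a. \<forall>i<M. \<forall>j<M. X i j = (\<Sum>\<gamma>\<in>\<Gamma>. a \<gamma> * G \<gamma> i j)"
    using assms unfolding valid_G_basis_def by - (elim conjE, assumption)+
  show "finite \<Gamma>" "0 \<in> \<Gamma>" by (fact fin zero)+
  show "0 < M"
    using card zero fin by (cases M) auto
  show "i < M \<Longrightarrow> j < M \<Longrightarrow> G 0 i j = (if i = j then 1 else 0)"
    and "\<gamma> \<in> \<Gamma> \<Longrightarrow> 0 \<le> \<gamma> \<Longrightarrow> i < M \<Longrightarrow> j < M \<Longrightarrow> G \<gamma> i j = G \<gamma> j i"
    and "\<gamma> \<in> \<Gamma> \<Longrightarrow> \<gamma> < 0 \<Longrightarrow> i < M \<Longrightarrow> j < M \<Longrightarrow> G \<gamma> i j = - G \<gamma> j i"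
    and "\<gamma> \<in> \<Gamma> \<Longrightarrow> \<gamma>' \<in> \<Gamma> \<Longrightarrow> \<gamma> \<noteq> \<gamma>' \<Longrightarrow> mtr M (G \<gamma>) (G \<gamma>') = 0"
    and "\<gamma> \<in> \<Gamma> \<Longrightarrow> \<gamma> \<noteq> 0 \<Longrightarrow> mtr M (G \<gamma>) (G \<gamma>) = 2"
    using id sym antisym orth norm by blast+
  show "\<exists>a. \<forall>i<M. \<forall>j<M. X i j = (\<Sum>\<gamma>\<in>\<Gamma>. a \<gamma> * G \<gamma> i j)"
    using spans by (rule spec)
qed

lemma valid_G_basis_mtr_self_pos:
  assumes B: "valid_G_basis M \<Gamma> G" and "\<gamma> \<in> \<Gamma>"
  shows "0 < mtr M (G \<gamma>) (G \<gamma>)"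
proof (cases "\<gamma> = 0")
  case True
  have "mtr M (G 0) (G 0) = real M"
    unfolding mtr_def by (simp add: valid_G_basis_identity[OF B] if_distrib cong: if_cong)
  then show ?thesis using True valid_G_basis_pos[OF B] by simp
next
  case False
  then show ?thesis using valid_G_basis_norm[OF B \<open>\<gamma> \<in> \<Gamma>\<close>] by simp
qed

lemma trace_antisym_eq_zero:
  assumes "\<And>i j. i < M \<Longrightarrow> j < M \<Longrightarrow> H i j = - H j i"
  shows "(\<Sum>i<M. H i i) = (0 :: real)"
proof (intro sum.neutral ballI)
  fix i assume "i \<in> {..<M}"
  then have "H i i = - H i i" using assms by blast
  then show "H i i = 0" by linarith
qed

lemma gtuples_eq_lists: "gtuples \<Gamma> N = {g. set g \<subseteq> \<Gamma> \<and> length g = N}"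
  unfolding gtuples_def by auto

lemma gtuples_finite: "finite \<Gamma> \<Longrightarrow> finite (gtuples \<Gamma> N)"
  by (simp add: gtuples_eq_lists finite_lists_length_eq)

lemma gtuples_length: "g \<in> gtuples \<Gamma> N \<Longrightarrow> length g = N"
  and gtuples_nth: "g \<in> gtuples \<Gamma> N \<Longrightarrow> k < N \<Longrightarrow> g ! k \<in> \<Gamma>"
  unfolding gtuples_def by auto

lemma gtuples_not_all_nonneg:
  "g \<in> gtuples \<Gamma> N \<Longrightarrow> \<not> all_nonneg g \<Longrightarrow> \<exists>k<N. g ! k < 0"
  unfolding gtuples_def all_nonneg_def by (auto simp: in_set_conv_nth not_le)

lemma all_nonneg_nth: "g \<in> gtuples \<Gamma> N \<Longrightarrow> all_nonneg g \<Longrightarrow> k < N \<Longrightarrow> 0 \<le> g ! k"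
  unfolding gtuples_def all_nonneg_def by auto

lemma replicate_zero_gtuples: "0 \<in> \<Gamma> \<Longrightarrow> replicate N 0 \<in> gtuples \<Gamma> N"
  and all_nonneg_replicate_zero: "all_nonneg (replicate N 0)"
  unfolding gtuples_def all_nonneg_def by auto

lemma mat_inner_tensorG:
  "mat_inner (tuples M N) (tensorG N G g) (tensorG N G h) = (\<Prod>k<N. mtr M (G (g ! k)) (G (h ! k)))"
  unfolding mat_inner_def tensorG_def mtr_def prod.distrib[symmetric] by (rule sum_tuples_prod2)

lemma tensorG_orthogonal:
  assumes B: "valid_G_basis M \<Gamma> G" and g: "g \<in> gtuples \<Gamma> N" and h: "h \<in> gtuples \<Gamma> N"
    and "g \<noteq> h"
  shows "mat_inner (tuples M N) (tensorG N G g) (tensorG N G h) = 0"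
proof -
  obtain k where k: "k < N" "g ! k \<noteq> h ! k"
    using \<open>g \<noteq> h\<close> gtuples_length[OF g] gtuples_length[OF h] nth_equalityI by metis
  then have "mtr M (G (g ! k)) (G (h ! k)) = 0"
    using valid_G_basis_orth[OF B gtuples_nth[OF g] gtuples_nth[OF h]] by blast
  then show ?thesis unfolding mat_inner_tensorG using k(1) by (intro prod_zero) auto
qed

lemma tensorG_self_pos:
  assumes B: "valid_G_basis M \<Gamma> G" and g: "g \<in> gtuples \<Gamma> N"
  shows "0 < mat_inner (tuples M N) (tensorG N G g) (tensorG N G g)"
  unfolding mat_inner_tensorG
proof (rule prod_pos)
  fix k assume "k \<in> {..<N}"
  then show "0 < mtr M (G (g ! k)) (G (g ! k))"
    using valid_G_basis_mtr_self_pos[OF B gtuples_nth[OF g]] by simp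
qed

lemma mat_inner_tensor_expansion:
  assumes B: "valid_G_basis M \<Gamma> G" and h: "h \<in> gtuples \<Gamma> N"
  shows "mat_inner (tuples M N) (tensor_expansion \<Gamma> N G c) (tensorG N G h)
           = c h * mat_inner (tuples M N) (tensorG N G h) (tensorG N G h)"
proof -
  have "mat_inner (tuples M N) (tensor_expansion \<Gamma> N G c) (tensorG N G h)
      = (\<Sum>g\<in>gtuples \<Gamma> N. c g * mat_inner (tuples M N) (tensorG N G g) (tensorG N G h))"
    unfolding tensor_expansion_def by (simp add: mat_inner_sum mat_inner_scale)
  also have "\<dots> = c h * mat_inner (tuples M N) (tensorG N G h) (tensorG N G h)"
    using gtuples_finite[OF valid_G_basis_finite[OF B]] h
    by (subst sum.remove[of _ h]) (auto intro!: sum.neutral simp: tensorG_orthogonal[OF B _ h])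
  finally show ?thesis .
qed

lemma mat_inner_tensor_expansions:
  assumes B: "valid_G_basis M \<Gamma> G"
  shows "mat_inner (tuples M N) (tensor_expansion \<Gamma> N G c) (tensor_expansion \<Gamma> N G d)
           = (\<Sum>g\<in>gtuples \<Gamma> N. c g * d g * mat_inner (tuples M N) (tensorG N G g) (tensorG N G g))"
proof -
  have "mat_inner (tuples M N) (tensor_expansion \<Gamma> N G c) (tensor_expansion \<Gamma> N G d)
      = (\<Sum>g\<in>gtuples \<Gamma> N. d g * mat_inner (tuples M N) (tensor_expansion \<Gamma> N G c) (tensorG N G g))"
    unfolding tensor_expansion_def[of _ _ _ d]
    by (simp add: mat_inner_commute[of _ "tensor_expansion \<Gamma> N G c"] mat_inner_sum mat_inner_scale)
  then show ?thesis by (simp add: mat_inner_tensor_expansion[OF B] mult_ac)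
qed

lemma tensorG_spans_indicator:
  assumes B: "valid_G_basis M \<Gamma> G" and st0: "s0 \<in> tuples M N" "t0 \<in> tuples M N"
  shows "\<exists>\<beta>. \<forall>s\<in>tuples M N. \<forall>t\<in>tuples M N.
           (if s = s0 \<and> t = t0 then 1 else 0) = tensor_expansion \<Gamma> N G \<beta> s t"
proof -
  have "\<forall>Y. \<exists>a. \<forall>i<M. \<forall>j<M. Y i j = (\<Sum>\<gamma>\<in>\<Gamma>. a \<gamma> * G \<gamma> i j)"
    using valid_G_basis_spans[OF B] by blast
  then obtain a where a: "\<And>Y i j. i < M \<Longrightarrow> j < M \<Longrightarrow> Y i j = (\<Sum>\<gamma>\<in>\<Gamma>. a Y \<gamma> * G \<gamma> i j)"
    by metis
  define A where "A i0 j0 = a (\<lambda>i j. if i = i0 \<and> j = j0 then 1 else 0)" for i0 j0 :: nat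
  have A: "(if i = i0 \<and> j = j0 then 1 else 0) = (\<Sum>\<gamma>\<in>\<Gamma>. A i0 j0 \<gamma> * G \<gamma> i j)"
    if "i < M" "j < M" for i0 j0 i j
    unfolding A_def using a[OF that, of "\<lambda>i j. if i = i0 \<and> j = j0 then 1 else 0"] by simp
  define \<beta> where "\<beta> g = (\<Prod>k<N. A (s0 ! k) (t0 ! k) (g ! k))" for g
  have "(if s = s0 \<and> t = t0 then 1 else 0) = tensor_expansion \<Gamma> N G \<beta> s t"
    if st: "s \<in> tuples M N" "t \<in> tuples M N" for s t
  proof -
    have "(\<Prod>k<N. if s ! k = s0 ! k \<and> t ! k = t0 ! k then 1 else 0 :: real)
        = (\<Prod>k<N. if s ! k = s0 ! k then 1 else 0) * (\<Prod>k<N. if t ! k = t0 ! k then 1 else 0)"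
      unfolding prod.distrib[symmetric] by (intro prod.cong) auto
    then have "(if s = s0 \<and> t = t0 then 1 else 0 :: real)
        = (\<Prod>k<N. if s ! k = s0 ! k \<and> t ! k = t0 ! k then 1 else 0)"
      using st st0 by (simp add: prod_nth_indicator tuples_length)
    also have "\<dots> = (\<Prod>k<N. \<Sum>\<gamma>\<in>\<Gamma>. A (s0 ! k) (t0 ! k) \<gamma> * G \<gamma> (s ! k) (t ! k))"
      using st by (intro prod.cong refl A) (auto simp: tuples_nth_less)
    also have "\<dots> = tensor_expansion \<Gamma> N G \<beta> s t"
      unfolding tensor_expansion_def tensorG_def \<beta>_def gtuples_eq_lists prod.distrib[symmetric]
      by (rule sum_lists_prod[OF valid_G_basis_finite[OF B], symmetric])
    finally show ?thesis .
  qed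
  then show ?thesis by (intro exI[of _ \<beta>] ballI)
qed

lemma tensorG_spans:
  assumes B: "valid_G_basis M \<Gamma> G"
  shows "\<exists>c. \<forall>s\<in>tuples M N. \<forall>t\<in>tuples M N. X s t = tensor_expansion \<Gamma> N G c s t"
proof -
  let ?I = "tuples M N"
  define \<beta> where "\<beta> s0 t0 = (SOME \<beta>. \<forall>s\<in>?I. \<forall>t\<in>?I.
      (if s = s0 \<and> t = t0 then 1 else 0) = tensor_expansion \<Gamma> N G \<beta> s t)" for s0 t0
  have \<beta>: "(if s = s0 \<and> t = t0 then 1 else 0) = tensor_expansion \<Gamma> N G (\<beta> s0 t0) s t"
    if "s0 \<in> ?I" "t0 \<in> ?I" "s \<in> ?I" "t \<in> ?I" for s0 t0 s t
    using someI_ex[OF tensorG_spans_indicator[OF B that(1,2)]] that(3,4) unfolding \<beta>_def by blast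
  define c where "c g = (\<Sum>s0\<in>?I. \<Sum>t0\<in>?I. X s0 t0 * \<beta> s0 t0 g)" for g
  have "X s t = tensor_expansion \<Gamma> N G c s t" if st: "s \<in> ?I" "t \<in> ?I" for s t
  proof -
    have "(\<Sum>t0\<in>?I. X s0 t0 * (if s = s0 \<and> t = t0 then 1 else 0)) = (if s = s0 then X s0 t else 0)"
      for s0
    proof (cases "s = s0")
      case True
      then have "(\<Sum>t0\<in>?I. X s0 t0 * (if s = s0 \<and> t = t0 then 1 else 0))
          = (\<Sum>t0\<in>?I. if t0 = t then X s0 t0 else 0)"
        by (intro sum.cong) auto
      then show ?thesis using True st(2) finite_tuples by simp
    qed simp
    then have "X s t = (\<Sum>s0\<in>?I. \<Sum>t0\<in>?I. X s0 t0 * (if s = s0 \<and> t = t0 then 1 else 0))"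
      using st finite_tuples by simp
    also have "\<dots> = (\<Sum>s0\<in>?I. \<Sum>t0\<in>?I. X s0 t0 * tensor_expansion \<Gamma> N G (\<beta> s0 t0) s t)"
      using st by (intro sum.cong refl) (simp add: \<beta>)
    also have "\<dots> = tensor_expansion \<Gamma> N G c s t"
      unfolding tensor_expansion_def c_def
      by (simp add: sum_distrib_left sum_distrib_right mult.assoc sum.swap[of _ "gtuples \<Gamma> N"])
    finally show ?thesis .
  qed
  then show ?thesis by blast
qed

lemma tensor_expansion_of_orthogonal:
  assumes B: "valid_G_basis M \<Gamma> G"
    and orth: "\<And>g. g \<in> gtuples \<Gamma> N \<Longrightarrow> P g \<Longrightarrow> mat_inner (tuples M N) X (tensorG N G g) = 0"
  shows "\<exists>c. (\<forall>g. P g \<longrightarrow> c g = 0) \<and>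
             (\<forall>s\<in>tuples M N. \<forall>t\<in>tuples M N. X s t = tensor_expansion \<Gamma> N G c s t)"
proof -
  obtain x where x: "\<forall>s\<in>tuples M N. \<forall>t\<in>tuples M N. X s t = tensor_expansion \<Gamma> N G x s t"
    using tensorG_spans[OF B] by blast
  have x0: "x g = 0" if g: "g \<in> gtuples \<Gamma> N" "P g" for g
  proof -
    have "x g * mat_inner (tuples M N) (tensorG N G g) (tensorG N G g) = 0"
      using orth[OF g] mat_inner_cong[of "tuples M N" X "tensor_expansion \<Gamma> N G x"] x
        mat_inner_tensor_expansion[OF B g(1)] by simp
    then show ?thesis using tensorG_self_pos[OF B g(1)] by simp
  qed
  define c where "c g = (if P g then 0 else x g)" for g
  have "tensor_expansion \<Gamma> N G x s t = tensor_expansion \<Gamma> N G c s t" for s t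
    unfolding tensor_expansion_def c_def using x0 by (intro sum.cong) auto
  then show ?thesis using x by (intro exI[of _ c]) (simp add: c_def)
qed

lemma tensorG_replicate_zero:
  assumes B: "valid_G_basis M \<Gamma> G" and st: "s \<in> tuples M N" "t \<in> tuples M N"
  shows "tensorG N G (replicate N 0) s t = idm s t"
proof -
  have "tensorG N G (replicate N 0) s t = (\<Prod>k<N. if s ! k = t ! k then 1 else 0)"
    unfolding tensorG_def using st by (intro prod.cong refl) (simp add: valid_G_basis_identity[OF B] tuples_nth_less)
  then show ?thesis using st by (simp add: prod_nth_indicator tuples_length idm_def)
qed

lemma trace_on_eq_zero_if_orthogonal_replicate_zero:
  assumes B: "valid_G_basis M \<Gamma> G"
    and "mat_inner (tuples M N) Q (tensorG N G (replicate N 0)) = 0"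
  shows "trace_on (tuples M N) Q = 0"
proof -
  have "mat_inner (tuples M N) Q (tensorG N G (replicate N 0)) = mat_inner (tuples M N) Q idm"
    unfolding mat_inner_def by (intro sum.cong refl) (simp add: tensorG_replicate_zero[OF B])
  then show ?thesis using assms(2) by (simp add: mat_inner_idm finite_tuples)
qed

lemma tensorG_transpose:
  assumes B: "valid_G_basis M \<Gamma> G" and g: "g \<in> gtuples \<Gamma> N" "all_nonneg g"
    and st: "s \<in> tuples M N" "t \<in> tuples M N"
  shows "tensorG N G g t s = tensorG N G g s t"
  unfolding tensorG_def using st
  by (intro prod.cong refl valid_G_basis_sym[OF B gtuples_nth[OF g(1)] all_nonneg_nth[OF g]])
    (auto simp: tuples_nth_less)

lemma msym_on_tensorG:
  assumes "valid_G_basis M \<Gamma> G" "h \<in> gtuples \<Gamma> N" "all_nonneg h"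
  shows "msym_on (tuples M N) (tensorG N G h)"
  unfolding msym_on_def using tensorG_transpose[OF assms] by simp

lemma trace_tensorG_eq_zero:
  assumes B: "valid_G_basis M \<Gamma> G" and g: "g \<in> gtuples \<Gamma> N" "\<not> all_nonneg g"
  shows "trace_on (tuples M N) (tensorG N G g) = 0"
proof -
  obtain k where k: "k < N" "g ! k < 0" using gtuples_not_all_nonneg[OF g] by blast
  have "(\<Sum>i<M. G (g ! k) i i) = 0"
    by (rule trace_antisym_eq_zero, rule valid_G_basis_antisym[OF B gtuples_nth[OF g(1) k(1)] k(2)])
  then have "(\<Prod>k<N. \<Sum>i<M. G (g ! k) i i) = 0" using k(1) by (intro prod_zero) auto
  moreover have "trace_on (tuples M N) (tensorG N G g) = (\<Prod>k<N. \<Sum>i<M. G (g ! k) i i)"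
    unfolding trace_on_def tensorG_def by (rule sum_tuples_prod)
  ultimately show ?thesis by simp
qed

section \<open>Product vectors\<close>

definition prod_vec :: "nat \<Rightarrow> (nat \<Rightarrow> nat \<Rightarrow> real) \<Rightarrow> nat list \<Rightarrow> real" where
  "prod_vec N a s = (\<Prod>k<N. a k (s ! k))"

lemma vnorm_nonneg: "0 \<le> vnorm n v"
  unfolding vnorm_def by (simp add: sum_nonneg)

lemma norm_mlin_apply_sq:
  "(vnorm D (mlin_apply M N T a))\<^sup>2 = quad_form (tuples M N) (TdagT D T) (prod_vec N a)"
proof -
  have "(vnorm D (mlin_apply M N T a))\<^sup>2 = (\<Sum>i<D. (\<Sum>s\<in>tuples M N. prod_vec N a s * T i s)\<^sup>2)"
    by (simp add: vnorm_def sum_nonneg mlin_apply_def prod_vec_def mult.commute)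
  also have "\<dots> = quad_form (tuples M N) (TdagT D T) (prod_vec N a)"
    unfolding TdagT_def quad_form_sum[symmetric] quad_form_rank_one[symmetric]
    by (rule quad_form_cong) (simp add: mult.commute)
  finally show ?thesis .
qed

lemma prod_vnorm_sq: "(\<Prod>k<N. vnorm M (a k))\<^sup>2 = quad_form (tuples M N) idm (prod_vec N a)"
proof -
  have "(\<Prod>k<N. vnorm M (a k))\<^sup>2 = (\<Prod>k<N. \<Sum>j<M. (a k j)\<^sup>2)"
    by (simp add: prod_power_distrib vnorm_def sum_nonneg)
  also have "\<dots> = (\<Sum>s\<in>tuples M N. (prod_vec N a s)\<^sup>2)"
    unfolding prod_vec_def prod_power_distrib by (rule sum_tuples_prod[symmetric])
  also have "\<dots> = quad_form (tuples M N) idm (prod_vec N a)"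
    by (simp add: quad_form_idm finite_tuples)
  finally show ?thesis .
qed

lemma mlin_apply_indicator:
  assumes "s \<in> tuples M N"
  shows "mlin_apply M N T (\<lambda>k j. if j = s ! k then 1 else 0) i = T i s"
proof -
  have "mlin_apply M N T (\<lambda>k j. if j = s ! k then 1 else 0) i
      = (\<Sum>s'\<in>tuples M N. T i s' * (if s' = s then 1 else 0))"
    unfolding mlin_apply_def using assms
    by (intro sum.cong refl) (simp add: prod_nth_indicator tuples_length)
  then show ?thesis using assms finite_tuples by (simp add: sum_mult_indicator)
qed

lemma quad_form_tensorG_prod_vec:
  "quad_form (tuples M N) (tensorG N G g) (prod_vec N a)
     = (\<Prod>k<N. \<Sum>i<M. \<Sum>j<M. a k i * G (g ! k) i j * a k j)"
  unfolding quad_form_def tensorG_def prod_vec_def prod.distrib[symmetric]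
  by (rule sum_tuples_prod2)

lemma quad_form_tensor_expansion_prod_vec:
  assumes B: "valid_G_basis M \<Gamma> G" and c: "\<And>g. all_nonneg g \<Longrightarrow> c g = 0"
  shows "quad_form (tuples M N) (tensor_expansion \<Gamma> N G c) (prod_vec N a) = 0"
proof -
  have "c g * quad_form (tuples M N) (tensorG N G g) (prod_vec N a) = 0"
    if g: "g \<in> gtuples \<Gamma> N" for g
  proof (cases "all_nonneg g")
    case False
    then obtain k where k: "k < N" "g ! k < 0" using gtuples_not_all_nonneg[OF g] by blast
    have "quad_form {..<M} (G (g ! k)) (a k) = 0"
      by (rule quad_form_antisym_eq_zero, rule valid_G_basis_antisym[OF B gtuples_nth[OF g k(1)] k(2)])
        auto
    then have "(\<Sum>i<M. \<Sum>j<M. a k i * G (g ! k) i j * a k j) = 0"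
      by (simp add: quad_form_def)
    then have "(\<Prod>k<N. \<Sum>i<M. \<Sum>j<M. a k i * G (g ! k) i j * a k j) = 0"
      using k(1) by (intro prod_zero) auto
    then show ?thesis by (simp add: quad_form_tensorG_prod_vec)
  qed (simp add: c)
  then have "(\<Sum>g\<in>gtuples \<Gamma> N. c g * quad_form (tuples M N) (tensorG N G g) (prod_vec N a)) = 0"
    by (intro sum.neutral) blast
  then show ?thesis
    unfolding tensor_expansion_def by (simp add: quad_form_sum quad_form_scale)
qed

text \<open>The rank-one terms come from
  \<open>e\<^sub>i e\<^sub>j\<^sup>T + e\<^sub>j e\<^sub>i\<^sup>T = (e\<^sub>i + e\<^sub>j)(e\<^sub>i + e\<^sub>j)\<^sup>T - e\<^sub>i e\<^sub>i\<^sup>T - e\<^sub>j e\<^sub>j\<^sup>T\<close>, indexed by \<open>r = 0, 1, 2\<close>.\<close>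
definition sym_rank_one_vec :: "nat \<times> nat \<times> nat \<Rightarrow> nat \<Rightarrow> real" where
  "sym_rank_one_vec = (\<lambda>(i, j, r) l. (if r \<noteq> 2 \<and> l = i then 1 else 0) + (if r \<noteq> 1 \<and> l = j then 1 else 0))"

definition sym_rank_one_coeff :: "(nat \<Rightarrow> nat \<Rightarrow> real) \<Rightarrow> nat \<times> nat \<times> nat \<Rightarrow> real" where
  "sym_rank_one_coeff H = (\<lambda>(i, j, r). if r = 0 then H i j / 2 else - H i j / 2)"

lemma symmetric_matrix_rank_one_sum:
  assumes sym: "\<And>i j. i < M \<Longrightarrow> j < M \<Longrightarrow> H i j = H j i" and ab: "a < M" "b < M"
  shows "H a b = (\<Sum>p\<in>{..<M} \<times> {..<M} \<times> {0, 1, 2}.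
                    sym_rank_one_coeff H p * sym_rank_one_vec p a * sym_rank_one_vec p b)"
proof -
  have pair: "(\<Sum>r\<in>{0::nat, 1, 2}. sym_rank_one_coeff H (i, j, r)
                  * sym_rank_one_vec (i, j, r) a * sym_rank_one_vec (i, j, r) b)
      = (if i = a \<and> j = b then H i j / 2 else 0) + (if i = b \<and> j = a then H i j / 2 else 0)" for i j
    by (cases "i = a"; cases "j = a"; cases "i = b"; cases "j = b")
      (simp_all add: sym_rank_one_coeff_def sym_rank_one_vec_def)
  have "(\<Sum>p\<in>{..<M} \<times> {..<M} \<times> {0, 1, 2}.
           sym_rank_one_coeff H p * sym_rank_one_vec p a * sym_rank_one_vec p b)
      = (\<Sum>i<M. \<Sum>j<M. \<Sum>r\<in>{0::nat, 1, 2}. sym_rank_one_coeff H (i, j, r)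
                  * sym_rank_one_vec (i, j, r) a * sym_rank_one_vec (i, j, r) b)"
    by (rule sum_triple_product)
  also have "\<dots> = (\<Sum>i<M. \<Sum>j<M. (if i = a \<and> j = b then H i j / 2 else 0)
                                   + (if i = b \<and> j = a then H i j / 2 else 0))"
    unfolding pair ..
  also have "\<dots> = H a b / 2 + H b a / 2"
    using ab by (simp add: sum.distrib sum_sum_lessThan_indicator)
  also have "\<dots> = H a b" using sym[OF ab] by simp
  finally show ?thesis ..
qed

text \<open>Expanding each symmetric factor into rank-one matrices turns the tensor product into a
  combination of rank-one matrices \<open>v v\<^sup>T\<close> of product vectors \<open>v\<close>.\<close>
lemma mat_inner_tensor_product_eq_zero:
  assumes vanish: "\<And>a. quad_form (tuples M N) X (prod_vec N a) = 0"
    and sym: "\<And>k i j. k < N \<Longrightarrow> i < M \<Longrightarrow> j < M \<Longrightarrow> H k i j = H k j i"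
  shows "mat_inner (tuples M N) X (\<lambda>s t. \<Prod>k<N. H k (s ! k) (t ! k)) = 0"
proof -
  let ?P = "{..<M} \<times> {..<M} \<times> {0::nat, 1, 2}"
  let ?L = "{\<pi>. set \<pi> \<subseteq> ?P \<and> length \<pi> = N}"
  define coeff where "coeff \<pi> = (\<Prod>k<N. sym_rank_one_coeff (H k) (\<pi> ! k))" for \<pi>
  define vec where "vec \<pi> k = sym_rank_one_vec (\<pi> ! k)" for \<pi> k
  have "(\<Prod>k<N. H k (s ! k) (t ! k)) = (\<Sum>\<pi>\<in>?L. coeff \<pi> * (prod_vec N (vec \<pi>) s * prod_vec N (vec \<pi>) t))"
    if st: "s \<in> tuples M N" "t \<in> tuples M N" for s t
  proof -
    have "(\<Prod>k<N. H k (s ! k) (t ! k))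
        = (\<Prod>k<N. \<Sum>p\<in>?P. sym_rank_one_coeff (H k) p * sym_rank_one_vec p (s ! k) * sym_rank_one_vec p (t ! k))"
      using st by (intro prod.cong refl symmetric_matrix_rank_one_sum) (auto simp: sym tuples_nth_less)
    also have "\<dots> = (\<Sum>\<pi>\<in>?L. \<Prod>k<N. sym_rank_one_coeff (H k) (\<pi> ! k)
                        * sym_rank_one_vec (\<pi> ! k) (s ! k) * sym_rank_one_vec (\<pi> ! k) (t ! k))"
      by (rule sum_lists_prod[symmetric]) simp
    also have "\<dots> = (\<Sum>\<pi>\<in>?L. coeff \<pi> * (prod_vec N (vec \<pi>) s * prod_vec N (vec \<pi>) t))"
      unfolding coeff_def prod_vec_def vec_def by (simp add: prod.distrib mult.assoc)
    finally show ?thesis .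
  qed
  then have "mat_inner (tuples M N) X (\<lambda>s t. \<Prod>k<N. H k (s ! k) (t ! k))
      = mat_inner (tuples M N) (\<lambda>s t. \<Sum>\<pi>\<in>?L. coeff \<pi> * (prod_vec N (vec \<pi>) s * prod_vec N (vec \<pi>) t)) X"
    by (subst mat_inner_commute) (rule mat_inner_cong; simp)
  also have "\<dots> = (\<Sum>\<pi>\<in>?L. coeff \<pi> * quad_form (tuples M N) X (prod_vec N (vec \<pi>)))"
    by (simp add: mat_inner_sum mat_inner_scale mat_inner_commute[of _ _ X] mat_inner_rank_one)
  finally show ?thesis by (simp add: vanish)
qed

section \<open>Dilations and semidefinite certificates\<close>

lemma TdagT_commute: "TdagT D T s t = TdagT D T t s"
  unfolding TdagT_def by (simp add: mult.commute)

lemma msym_on_TdagT: "msym_on I (TdagT D T)"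
  unfolding msym_on_def using TdagT_commute by blast

definition sdp_certificate ::
  "nat \<Rightarrow> nat \<Rightarrow> nat \<Rightarrow> (nat \<Rightarrow> nat list \<Rightarrow> real) \<Rightarrow> int set \<Rightarrow> (int \<Rightarrow> nat \<Rightarrow> nat \<Rightarrow> real)
     \<Rightarrow> (int list \<Rightarrow> real) \<Rightarrow> bool" where
  "sdp_certificate M N D T \<Gamma> G c \<longleftrightarrow> (\<forall>g. all_nonneg g \<longrightarrow> c g = 0) \<and>
     msym_on (tuples M N) (tensor_expansion \<Gamma> N G c) \<and>
     psd_on (tuples M N) (\<lambda>s t. idm s t - TdagT D T s t - tensor_expansion \<Gamma> N G c s t)"

definition dilation_defect :: "nat \<Rightarrow> (nat \<Rightarrow> nat list \<Rightarrow> real) \<Rightarrow> nat list \<Rightarrow> nat list \<Rightarrow> real" where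
  "dilation_defect D T = (\<lambda>s t. idm s t - TdagT D T s t)"

lemma msym_on_dilation_defect: "msym_on I (dilation_defect D T)"
  unfolding msym_on_def dilation_defect_def by (simp add: idm_commute TdagT_commute)

lemma sdp_certificate_of_orthogonal:
  assumes B: "valid_G_basis M \<Gamma> G" and sym: "msym_on (tuples M N) Q"
    and orth: "\<And>h. h \<in> gtuples \<Gamma> N \<Longrightarrow> all_nonneg h \<Longrightarrow> mat_inner (tuples M N) Q (tensorG N G h) = 0"
    and psd: "psd_on (tuples M N) (\<lambda>s t. dilation_defect D T s t - Q s t)"
  shows "\<exists>c. sdp_certificate M N D T \<Gamma> G c"
proof -
  let ?I = "tuples M N"
  obtain c where c: "\<forall>g. all_nonneg g \<longrightarrow> c g = 0"
    and Qc: "\<forall>s\<in>?I. \<forall>t\<in>?I. Q s t = tensor_expansion \<Gamma> N G c s t"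
    using tensor_expansion_of_orthogonal[OF B, where P = all_nonneg] orth by blast
  have "msym_on ?I (tensor_expansion \<Gamma> N G c)"
    using sym Qc by (simp add: msym_on_def)
  moreover have "psd_on ?I (\<lambda>s t. idm s t - TdagT D T s t - tensor_expansion \<Gamma> N G c s t)"
    using psd Qc psd_on_cong[of ?I "\<lambda>s t. dilation_defect D T s t - Q s t"]
    by (simp add: dilation_defect_def)
  ultimately show ?thesis using c unfolding sdp_certificate_def by blast
qed

lemma dilation_imp_sdp_certificate:
  assumes B: "valid_G_basis M \<Gamma> G" and "has_np_dilation M N D T"
  shows "\<exists>c. sdp_certificate M N D T \<Gamma> G c"
proof -
  let ?I = "tuples M N"
  obtain D' T' where D': "D \<le> D'" and np: "is_norm_preserving M N D' T'"
    and agree: "\<And>a i. i < D \<Longrightarrow> mlin_apply M N T' a i = mlin_apply M N T a i"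
    using assms(2) unfolding has_np_dilation_def by blast
  have T': "T' i s = T i s" if "i < D" "s \<in> ?I" for i s
    using agree[OF that(1), of "\<lambda>k j. if j = s ! k then 1 else 0"]
    by (simp add: mlin_apply_indicator[OF that(2)])
  define Q where "Q = dilation_defect D' T'"
  have "quad_form ?I Q (prod_vec N a)
      = (\<Prod>k<N. vnorm M (a k))\<^sup>2 - (vnorm D' (mlin_apply M N T' a))\<^sup>2" for a
    by (simp add: Q_def dilation_defect_def quad_form_diff norm_mlin_apply_sq prod_vnorm_sq)
  then have "quad_form ?I Q (prod_vec N a) = 0" for a
    using np unfolding is_norm_preserving_def by simp
  then have orth: "mat_inner ?I Q (tensorG N G h) = 0" if "h \<in> gtuples \<Gamma> N" "all_nonneg h" for h
    unfolding tensorG_def using that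
    by (intro mat_inner_tensor_product_eq_zero valid_G_basis_sym[OF B gtuples_nth all_nonneg_nth])
      auto
  have "dilation_defect D T s t - Q s t = (\<Sum>i\<in>{D..<D'}. T' i s * T' i t)"
    if "s \<in> ?I" "t \<in> ?I" for s t
    unfolding Q_def dilation_defect_def TdagT_def using D' that
    by (simp add: T' sum.atLeastLessThan_concat[of 0 D D', symmetric] atLeast0LessThan[symmetric])
  then have psd: "psd_on ?I (\<lambda>s t. dilation_defect D T s t - Q s t)"
    by (simp add: psd_on_cong psd_on_gram)
  show ?thesis
    by (rule sdp_certificate_of_orthogonal[OF B _ orth psd]) (simp add: Q_def msym_on_dilation_defect)
qed

lemma sdp_certificate_imp_dilation:
  assumes B: "valid_G_basis M \<Gamma> G" and "sdp_certificate M N D T \<Gamma> G c"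
  shows "has_np_dilation M N D T"
proof -
  let ?I = "tuples M N"
  have c: "\<And>g. all_nonneg g \<Longrightarrow> c g = 0"
    and R: "psd_on ?I (\<lambda>s t. idm s t - TdagT D T s t - tensor_expansion \<Gamma> N G c s t)"
    using assms(2) unfolding sdp_certificate_def by auto
  obtain m :: nat and S where S: "\<forall>s\<in>?I. \<forall>t\<in>?I.
      idm s t - TdagT D T s t - tensor_expansion \<Gamma> N G c s t = (\<Sum>i<m. S i s * S i t)"
    using psd_on_gram_factor[OF finite_tuples R] by blast
  define T' where "T' i s = (if i < D then T i s else S (i - D) s)" for i s
  have T'_gram: "TdagT (D + m) T' s t = idm s t - tensor_expansion \<Gamma> N G c s t"
    if "s \<in> ?I" "t \<in> ?I" for s t
  proof -
    have "TdagT (D + m) T' s t = TdagT D T s t + (\<Sum>i<m. S i s * S i t)"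
      unfolding TdagT_def T'_def sum_lessThan_add by simp
    moreover have "idm s t - TdagT D T s t - tensor_expansion \<Gamma> N G c s t = (\<Sum>i<m. S i s * S i t)"
      using S that by blast
    ultimately show ?thesis by linarith
  qed
  have "(vnorm (D + m) (mlin_apply M N T' a))\<^sup>2 = (\<Prod>k<N. vnorm M (a k))\<^sup>2" for a
  proof -
    have "quad_form ?I (TdagT (D + m) T') (prod_vec N a)
        = quad_form ?I (\<lambda>s t. idm s t - tensor_expansion \<Gamma> N G c s t) (prod_vec N a)"
      by (rule quad_form_cong) (rule T'_gram)
    then show ?thesis
      by (simp add: norm_mlin_apply_sq prod_vnorm_sq quad_form_diff quad_form_tensor_expansion_prod_vec[OF B c])
  qed
  then have "is_norm_preserving M N (D + m) T'"
    unfolding is_norm_preserving_def using vnorm_nonneg by (simp add: power2_eq_iff_nonneg prod_nonneg)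
  moreover have "mlin_apply M N T' a i = mlin_apply M N T a i" if "i < D" for a i
    using that unfolding mlin_apply_def T'_def by simp
  ultimately show ?thesis unfolding has_np_dilation_def by (intro exI[of _ "D + m"] exI[of _ T']) auto
qed

section \<open>The symmetric-state bound\<close>

definition symmetric_state_bound ::
  "nat \<Rightarrow> nat \<Rightarrow> nat \<Rightarrow> (nat \<Rightarrow> nat list \<Rightarrow> real) \<Rightarrow> int set \<Rightarrow> (int \<Rightarrow> nat \<Rightarrow> nat \<Rightarrow> real) \<Rightarrow> bool"
  where
  "symmetric_state_bound M N D T \<Gamma> G \<longleftrightarrow>
     (\<forall>c. (\<forall>g. \<not> all_nonneg g \<longrightarrow> c g = 0) \<longrightarrow>
        psd_on (tuples M N) (tensor_expansion \<Gamma> N G c) \<longrightarrow>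
        trace_on (tuples M N) (tensor_expansion \<Gamma> N G c) = 1 \<longrightarrow>
        trace_on (tuples M N) (mat_mult_on (tuples M N) (tensor_expansion \<Gamma> N G c) (TdagT D T)) \<le> 1)"

lemma sdp_certificate_imp_symmetric_state_bound:
  assumes B: "valid_G_basis M \<Gamma> G" and "sdp_certificate M N D T \<Gamma> G c"
  shows "symmetric_state_bound M N D T \<Gamma> G"
  unfolding symmetric_state_bound_def
proof (intro allI impI)
  let ?I = "tuples M N"
  fix d assume d: "\<forall>g. \<not> all_nonneg g \<longrightarrow> d g = 0"
    and \<rho>: "psd_on ?I (tensor_expansion \<Gamma> N G d)" and tr: "trace_on ?I (tensor_expansion \<Gamma> N G d) = 1"
  let ?\<rho> = "tensor_expansion \<Gamma> N G d" and ?Q = "tensor_expansion \<Gamma> N G c"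
  define R where "R = (\<lambda>s t. idm s t - TdagT D T s t - ?Q s t)"
  have c: "\<forall>g. all_nonneg g \<longrightarrow> c g = 0" and R: "psd_on ?I R"
    using assms(2) unfolding sdp_certificate_def R_def by auto
  have "trace_on ?I (mat_mult_on ?I ?\<rho> (TdagT D T)) = mat_inner ?I (\<lambda>s t. idm s t - ?Q s t - R s t) ?\<rho>"
    by (simp add: trace_on_mat_mult_on[OF msym_on_TdagT] mat_inner_commute[of ?I ?\<rho>] R_def)
  also have "\<dots> = mat_inner ?I idm ?\<rho> - mat_inner ?I ?Q ?\<rho> - mat_inner ?I R ?\<rho>"
    by (simp add: mat_inner_diff)
  finally have "trace_on ?I (mat_mult_on ?I ?\<rho> (TdagT D T))
      = mat_inner ?I idm ?\<rho> - mat_inner ?I ?Q ?\<rho> - mat_inner ?I R ?\<rho>" .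
  moreover have "mat_inner ?I idm ?\<rho> = 1"
    using tr mat_inner_commute[of ?I idm ?\<rho>] mat_inner_idm[OF finite_tuples, where A = ?\<rho>] by simp
  moreover have "mat_inner ?I ?Q ?\<rho> = 0"
    unfolding mat_inner_tensor_expansions[OF B] using c d by (intro sum.neutral) auto
  moreover have "0 \<le> mat_inner ?I R ?\<rho>"
    by (rule mat_inner_psd_nonneg[OF finite_tuples R \<rho>])
  ultimately show "trace_on ?I (mat_mult_on ?I ?\<rho> (TdagT D T)) \<le> 1" by simp
qed

lemma symmetric_state_bound_imp_defect_nonneg:
  assumes B: "valid_G_basis M \<Gamma> G" and bound: "symmetric_state_bound M N D T \<Gamma> G"
    and \<rho>: "density_on (tuples M N) \<rho>"
    and orth: "\<And>g. g \<in> gtuples \<Gamma> N \<Longrightarrow> \<not> all_nonneg g \<Longrightarrow> mat_inner (tuples M N) \<rho> (tensorG N G g) = 0"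
  shows "0 \<le> mat_inner (tuples M N) \<rho> (dilation_defect D T)"
proof -
  let ?I = "tuples M N"
  obtain d where d: "\<forall>g. \<not> all_nonneg g \<longrightarrow> d g = 0"
    and \<rho>d: "\<forall>s\<in>?I. \<forall>t\<in>?I. \<rho> s t = tensor_expansion \<Gamma> N G d s t"
    using tensor_expansion_of_orthogonal[where P = "\<lambda>g. \<not> all_nonneg g", OF B orth] by blast
  have \<rho>d': "\<And>s t. s \<in> ?I \<Longrightarrow> t \<in> ?I \<Longrightarrow> \<rho> s t = tensor_expansion \<Gamma> N G d s t"
    using \<rho>d by blast
  have "psd_on ?I \<rho> \<longleftrightarrow> psd_on ?I (tensor_expansion \<Gamma> N G d)"
    by (rule psd_on_cong) (rule \<rho>d')
  then have "psd_on ?I (tensor_expansion \<Gamma> N G d)"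
    using \<rho> by (simp add: density_on_def)
  moreover have "trace_on ?I (tensor_expansion \<Gamma> N G d) = 1"
    using \<rho> \<rho>d' by (simp add: density_on_def trace_on_def)
  ultimately have "trace_on ?I (mat_mult_on ?I (tensor_expansion \<Gamma> N G d) (TdagT D T)) \<le> 1"
    using bound d unfolding symmetric_state_bound_def by blast
  moreover have "mat_inner ?I (tensor_expansion \<Gamma> N G d) (TdagT D T) = mat_inner ?I \<rho> (TdagT D T)"
    using \<rho>d' by (intro mat_inner_cong) simp
  ultimately have "mat_inner ?I \<rho> (TdagT D T) \<le> 1"
    by (simp add: trace_on_mat_mult_on[OF msym_on_TdagT])
  moreover have "mat_inner ?I \<rho> idm = 1"
    using \<rho> by (simp add: mat_inner_idm finite_tuples density_on_def)
  moreover have "mat_inner ?I \<rho> (dilation_defect D T) = mat_inner ?I \<rho> idm - mat_inner ?I \<rho> (TdagT D T)"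
    unfolding dilation_defect_def mat_inner_commute[of ?I \<rho>] by (rule mat_inner_diff)
  ultimately show ?thesis by simp
qed

text \<open>Separation with the family \<open>1 - T\<^sup>\<dagger>T + \<epsilon>\<close> (index \<open>None\<close>) and the tensors with a negative
  component (index \<open>Some g\<close>); the maximally mixed state is orthogonal to the latter, which forces the
  first coefficient to be positive.\<close>
lemma symmetric_state_bound_imp_separating_functional:
  assumes B: "valid_G_basis M \<Gamma> G" and bound: "symmetric_state_bound M N D T \<Gamma> G" and "0 < \<epsilon>"
  obtains a0 q where "0 < a0"
    and "\<And>\<rho>. density_on (tuples M N) \<rho> \<Longrightarrow>
           0 < a0 * (mat_inner (tuples M N) \<rho> (dilation_defect D T) + \<epsilon>)
               + (\<Sum>g\<in>{g\<in>gtuples \<Gamma> N. \<not> all_nonneg g}. q g * mat_inner (tuples M N) \<rho> (tensorG N G g))"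
proof -
  let ?I = "tuples M N" and ?K0 = "{g\<in>gtuples \<Gamma> N. \<not> all_nonneg g}"
  let ?Z = "dilation_defect D T"
  define Bk where "Bk k = (case k of None \<Rightarrow> (\<lambda>s t. ?Z s t + \<epsilon> * idm s t) | Some g \<Rightarrow> tensorG N G g)"
    for k
  have Bk_Some: "Bk (Some g) = tensorG N G g" for g
    by (simp add: Bk_def)
  have finK0: "finite ?K0" using gtuples_finite[OF valid_G_basis_finite[OF B]] by simp
  have Bk_None: "mat_inner ?I \<rho> (Bk None) = mat_inner ?I \<rho> ?Z + \<epsilon>" if "density_on ?I \<rho>" for \<rho>
    using mat_inner_density_shift[OF finite_tuples that, of ?Z \<epsilon>]
    by (simp add: Bk_def mat_inner_commute[of ?I \<rho>])
  have no_common_zero: "\<exists>k\<in>insert None (Some ` ?K0). mat_inner ?I \<rho> (Bk k) \<noteq> 0"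
    if \<rho>: "density_on ?I \<rho>" for \<rho>
  proof (rule ccontr)
    assume all_zero: "\<not> ?thesis"
    then have "0 \<le> mat_inner ?I \<rho> ?Z"
      by (intro symmetric_state_bound_imp_defect_nonneg[OF B bound \<rho>]) (auto simp: Bk_def)
    moreover have "mat_inner ?I \<rho> (Bk None) = 0" using all_zero by blast
    ultimately show False using Bk_None[OF \<rho>] \<open>0 < \<epsilon>\<close> by simp
  qed
  have "finite (insert None (Some ` ?K0))" using finK0 by simp
  then obtain a where a: "\<And>\<rho>. density_on ?I \<rho> \<Longrightarrow> 0 < (\<Sum>k\<in>insert None (Some ` ?K0). a k * mat_inner ?I \<rho> (Bk k))"
    using density_on_separation[OF finite_tuples _ no_common_zero] by blast
  have a_sum: "0 < a None * (mat_inner ?I \<rho> ?Z + \<epsilon>) + (\<Sum>g\<in>?K0. a (Some g) * mat_inner ?I \<rho> (tensorG N G g))"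
    if "density_on ?I \<rho>" for \<rho>
    using a[OF that] finK0 by (simp add: sum.reindex Bk_None[OF that] Bk_Some)
  define \<rho>0 :: "nat list \<Rightarrow> nat list \<Rightarrow> real" where "\<rho>0 = (\<lambda>s t. idm s t / real (card ?I))"
  have \<rho>0: "density_on ?I \<rho>0"
    unfolding \<rho>0_def
    by (rule density_on_maximally_mixed[OF finite_tuples tuples_nonempty[OF valid_G_basis_pos[OF B]]])
  have orth0: "mat_inner ?I \<rho>0 (tensorG N G g) = 0" if "g \<in> gtuples \<Gamma> N" "\<not> all_nonneg g" for g
    unfolding \<rho>0_def mat_inner_maximally_mixed[OF finite_tuples] trace_tensorG_eq_zero[OF B that] by simp
  have "0 < a None * (mat_inner ?I \<rho>0 ?Z + \<epsilon>)"
    using a_sum[OF \<rho>0] orth0 by simp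
  moreover have "0 \<le> mat_inner ?I \<rho>0 ?Z"
    using symmetric_state_bound_imp_defect_nonneg[OF B bound \<rho>0 orth0] .
  ultimately have "0 < a None" using \<open>0 < \<epsilon>\<close> by (simp add: zero_less_mult_iff)
  then show ?thesis
    by (rule that[of "a None" "\<lambda>g. a (Some g)"]) (rule a_sum)
qed

text \<open>\<open>Q\<close> is the symmetrised tensor part of the separating functional, divided by minus twice the
  coefficient of the defect, so that the functional becomes \<open>\<rho> \<mapsto> a0 \<cdot> mat_inner \<rho> (1 - T\<^sup>\<dagger>T + \<epsilon> - Q)\<close>.\<close>
lemma approx_sdp_certificate:
  assumes B: "valid_G_basis M \<Gamma> G" and bound: "symmetric_state_bound M N D T \<Gamma> G" and "0 < \<epsilon>"
  shows "\<exists>Q. msym_on (tuples M N) Q \<and>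
             (\<forall>h\<in>gtuples \<Gamma> N. all_nonneg h \<longrightarrow> mat_inner (tuples M N) Q (tensorG N G h) = 0) \<and>
             psd_on (tuples M N) (\<lambda>s t. dilation_defect D T s t + \<epsilon> * idm s t - Q s t)"
proof -
  let ?I = "tuples M N" and ?K0 = "{g\<in>gtuples \<Gamma> N. \<not> all_nonneg g}" and ?Z = "dilation_defect D T"
  obtain a0 q where a0: "0 < a0" and sep: "\<And>\<rho>. density_on ?I \<rho> \<Longrightarrow>
      0 < a0 * (mat_inner ?I \<rho> ?Z + \<epsilon>) + (\<Sum>g\<in>?K0. q g * mat_inner ?I \<rho> (tensorG N G g))"
    using symmetric_state_bound_imp_separating_functional[OF B bound \<open>0 < \<epsilon>\<close>] by blast
  define Q0 where "Q0 = (\<lambda>s t. \<Sum>g\<in>?K0. q g * tensorG N G g s t)"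
  define \<kappa> where "\<kappa> = - 1 / (2 * a0)"
  define Q where "Q = (\<lambda>s t. \<kappa> * (Q0 s t + Q0 t s))"
  have sym: "msym_on ?I Q" unfolding msym_on_def Q_def by (simp add: add.commute)
  have "mat_inner ?I Q (tensorG N G h) = 0" if h: "h \<in> gtuples \<Gamma> N" "all_nonneg h" for h
  proof -
    have "g \<noteq> h" if "g \<in> ?K0" for g using that h(2) by auto
    then have "mat_inner ?I Q0 (tensorG N G h) = 0"
      by (simp add: Q0_def mat_inner_sum mat_inner_scale tensorG_orthogonal[OF B _ h(1)])
    then show ?thesis
      by (simp add: Q_def mat_inner_scale mat_inner_add mat_inner_transpose_msym_on[OF msym_on_tensorG[OF B h], of Q0])
  qed
  moreover have "psd_on ?I (\<lambda>s t. ?Z s t + \<epsilon> * idm s t - Q s t)"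
  proof (rule psd_on_if_mat_inner_density_nonneg[OF finite_tuples])
    show "msym_on ?I (\<lambda>s t. ?Z s t + \<epsilon> * idm s t - Q s t)"
      using sym msym_on_dilation_defect[of ?I D T] by (simp add: msym_on_def idm_commute)
    fix \<rho> assume \<rho>: "density_on ?I \<rho>"
    then have sym\<rho>: "msym_on ?I \<rho>"
      by (simp add: density_on_def psd_on_imp_msym_on)
    have "mat_inner ?I Q0 \<rho> = (\<Sum>g\<in>?K0. q g * mat_inner ?I \<rho> (tensorG N G g))"
      unfolding Q0_def mat_inner_sum mat_inner_scale by (simp add: mat_inner_commute[of ?I _ \<rho>])
    moreover have "mat_inner ?I Q \<rho> = 2 * \<kappa> * mat_inner ?I Q0 \<rho>"
      unfolding Q_def mat_inner_scale mat_inner_add mat_inner_transpose_msym_on[OF sym\<rho>, of Q0] by simp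
    moreover have "mat_inner ?I (\<lambda>s t. ?Z s t + \<epsilon> * idm s t) \<rho> = mat_inner ?I \<rho> ?Z + \<epsilon>"
      using mat_inner_density_shift[OF finite_tuples \<rho>] by (simp add: mat_inner_commute[of ?I ?Z])
    ultimately have "mat_inner ?I (\<lambda>s t. ?Z s t + \<epsilon> * idm s t - Q s t) \<rho>
        = (a0 * (mat_inner ?I \<rho> ?Z + \<epsilon>) + (\<Sum>g\<in>?K0. q g * mat_inner ?I \<rho> (tensorG N G g))) / a0"
      using a0 by (simp add: mat_inner_diff \<kappa>_def field_simps)
    then show "0 \<le> mat_inner ?I (\<lambda>s t. ?Z s t + \<epsilon> * idm s t - Q s t) \<rho>"
      using sep[OF \<rho>] a0 by simp
  qed
  ultimately show ?thesis using sym by (intro exI[of _ Q]) simp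
qed

lemma symmetric_state_bound_imp_sdp_certificate:
  assumes B: "valid_G_basis M \<Gamma> G" and bound: "symmetric_state_bound M N D T \<Gamma> G"
  shows "\<exists>c. sdp_certificate M N D T \<Gamma> G c"
proof -
  let ?I = "tuples M N" and ?Z = "dilation_defect D T"
  define e :: "nat \<Rightarrow> real" where "e = (\<lambda>n. 1 / real (Suc n))"
  have e: "0 < e n" "e n \<le> 1" for n by (auto simp: e_def)
  have "\<forall>n. \<exists>Q. msym_on ?I Q \<and> (\<forall>h\<in>gtuples \<Gamma> N. all_nonneg h \<longrightarrow> mat_inner ?I Q (tensorG N G h) = 0)
                \<and> psd_on ?I (\<lambda>s t. ?Z s t + e n * idm s t - Q s t)"
    using approx_sdp_certificate[OF B bound e(1)] by blast
  then obtain Qs where Qs: "\<forall>n. msym_on ?I (Qs n) \<and>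
      (\<forall>h\<in>gtuples \<Gamma> N. all_nonneg h \<longrightarrow> mat_inner ?I (Qs n) (tensorG N G h) = 0) \<and>
      psd_on ?I (\<lambda>s t. ?Z s t + e n * idm s t - Qs n s t)"
    by (auto dest!: choice)
  then have Qs_sym: "\<And>n. msym_on ?I (Qs n)"
    and Qs_orth: "\<And>n h. h \<in> gtuples \<Gamma> N \<Longrightarrow> all_nonneg h \<Longrightarrow> mat_inner ?I (Qs n) (tensorG N G h) = 0"
    and Qs_psd: "\<And>n. psd_on ?I (\<lambda>s t. ?Z s t + e n * idm s t - Qs n s t)"
    by blast+
  \<comment> \<open>The approximate certificates have zero trace, hence bounded entries, so a subsequence converges.\<close>
  have "trace_on ?I (Qs n) = 0" for n
    using Qs_orth[OF replicate_zero_gtuples[OF valid_G_basis_zero[OF B]] all_nonneg_replicate_zero]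
    by (rule trace_on_eq_zero_if_orthogonal_replicate_zero[OF B])
  then have "\<exists>C. \<forall>n. \<bar>Qs n s t\<bar> \<le> C" if "s \<in> ?I" "t \<in> ?I" for s t
    using psd_on_shifted_entry_bound[OF finite_tuples that _ Qs_psd] e by (meson less_imp_le)
  then obtain r Q where r: "strict_mono r" and lim: "\<forall>s\<in>?I. \<forall>t\<in>?I. (\<lambda>n. Qs (r n) s t) \<longlonglongrightarrow> Q s t"
    using matrix_seq_convergent_subseq[OF finite_tuples, where X = Qs] by blast
  have "e \<longlonglongrightarrow> 0"
    using LIMSEQ_inverse_real_of_nat by (simp add: e_def inverse_eq_divide)
  then have "(\<lambda>n. e (r n)) \<longlonglongrightarrow> 0"
    using LIMSEQ_subseq_LIMSEQ[OF _ r] by (simp add: o_def)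
  then have "\<forall>s\<in>?I. \<forall>t\<in>?I. (\<lambda>n. ?Z s t + e (r n) * idm s t - Qs (r n) s t) \<longlonglongrightarrow> ?Z s t - Q s t"
    using lim by (auto intro!: tendsto_eq_intros)
  then have psd: "psd_on ?I (\<lambda>s t. ?Z s t - Q s t)"
    by (rule psd_on_limit) (rule Qs_psd)
  have sym: "msym_on ?I Q" by (rule msym_on_limit[OF lim Qs_sym])
  have "mat_inner ?I Q (tensorG N G h) = 0" if "h \<in> gtuples \<Gamma> N" "all_nonneg h" for h
    using tendsto_mat_inner[OF lim, of "tensorG N G h"] Qs_orth[OF that] by (simp add: LIMSEQ_const_iff)
  then show ?thesis by (rule sdp_certificate_of_orthogonal[OF B sym _ psd])
qed

theorem proposition7:
  fixes M N D :: nat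
    and T :: "nat \<Rightarrow> nat list \<Rightarrow> real"
    and \<Gamma> :: "int set"
    and G :: "int \<Rightarrow> nat \<Rightarrow> nat \<Rightarrow> real"
  assumes basis: "valid_G_basis M \<Gamma> G"
    and contr: "is_contraction M N D T"
  shows "(has_np_dilation M N D T \<longleftrightarrow>
           (\<exists>c. (\<forall>g. all_nonneg g \<longrightarrow> c g = 0) \<and>
                msym_on (tuples M N) (tensor_expansion \<Gamma> N G c) \<and>
                psd_on (tuples M N)
                  (\<lambda>s t. idm s t - TdagT D T s t - tensor_expansion \<Gamma> N G c s t)))
       \<and> ((\<exists>c. (\<forall>g. all_nonneg g \<longrightarrow> c g = 0) \<and>
                msym_on (tuples M N) (tensor_expansion \<Gamma> N G c) \<and>
                psd_on (tuples M N)
                  (\<lambda>s t. idm s t - TdagT D T s t - tensor_expansion \<Gamma> N G c s t))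
          \<longleftrightarrow>
          (\<forall>c. (\<forall>g. \<not> all_nonneg g \<longrightarrow> c g = 0) \<longrightarrow>
               psd_on (tuples M N) (tensor_expansion \<Gamma> N G c) \<longrightarrow>
               trace_on (tuples M N) (tensor_expansion \<Gamma> N G c) = 1 \<longrightarrow>
               trace_on (tuples M N)
                 (mat_mult_on (tuples M N) (tensor_expansion \<Gamma> N G c) (TdagT D T)) \<le> 1))"
proof -
  have one_two: "has_np_dilation M N D T \<longleftrightarrow> (\<exists>c. sdp_certificate M N D T \<Gamma> G c)"
    using dilation_imp_sdp_certificate[OF basis] sdp_certificate_imp_dilation[OF basis] by blast
  have two_three: "(\<exists>c. sdp_certificate M N D T \<Gamma> G c) \<longleftrightarrow> symmetric_state_bound M N D T \<Gamma> G"
    using sdp_certificate_imp_symmetric_state_bound[OF basis]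
      symmetric_state_bound_imp_sdp_certificate[OF basis] by blast
  from one_two two_three show ?thesis
    unfolding sdp_certificate_def symmetric_state_bound_def by (rule conjI)
qed

end
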